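(* For any combinatorial auction as described in the context, Algorithm 1 (described in the context) converges to Artificial Walrasian Equilibrium prices: its loop ends, and the price vector $p$ (on original and artificial items) produced in the final step, together with $x^*$, forms an Artificial Walrasian Equilibrium.
   Context: Combinatorial auction: item types $j\in\mathcal J$ with supply $c_j\in\mathbb Z_{\ge1}$ (vector $c$); bidders $\mathcal I$; finite set of bids $\mathcal K$, bid $k$ made by bidder $i(k)$ with bundle $a^k\in\mathbb Z^J_{\ge0}$, $a^k\le c$, amount $b_k\ge0$ (row vector $b$); bids taken truthful. $\bm A$ = matrix with columns $a^k$, $\bm B$ with $\bm B_{i,k}=1$ iff bid $k$ belongs to bidder $i$. WDP: maximize $bx$ over $x\in\{0,1\}^K$ with $\bm Ax\le c$, $\bm Bx\le\bm 1$ (feasible allocations); WDP-LP is its relaxation with $0\le x\le\bm 1$, with optimal value $w^f$; $w$ is the WDP optimum and $x^*$ an optimal WDP solution; $a^{i*},b_{i*}$ bundle and amount of $i$'s accepted bid. $\bm D$ is the matrix whose columns are $x^*-x^\ell$ over all set-maximal feasible allocations $x^\ell$ (feasible allocations to which no further bid can be added). A valid cut is $(\alpha,\alpha_0)$, $\alpha\in\mathbb R^K_{\ge0}$, with $\alpha x\le\alpha_0$ for all feasible $x$ and $\alpha x^*=\alpha_0$; it is added as an artificial item by appending row $\alpha$ to $\bm A$ with supply $\alpha_0$. A Walrasian equilibrium is $(x^*,p)$, $p\ge0$, with $s_i=b_{i*}-p\,a^{i*}\ge0$, $p\,a^k+s_{i(k)}\ge b_k$ for all $k$, and $p_j=0$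 for items in excess supply; an Artificial Walrasian Equilibrium (AWE) is a Walrasian equilibrium of the auction augmented by finitely many valid cuts. Algorithm 1: Solve WDP and WDP-LP. While $w^f>w$: with $x^f$ the current optimal WDP-LP solution, solve the LP: maximize $\bar\alpha x^f$ over $\bar\alpha\in\mathbb R^K_{\ge0}$ subject to $\bar\alpha\bm D\ge\bm 0$ and $\bar\alpha x^*=\bar\alpha_0=1$; find the smallest $\gamma\ge1$ with $\gamma\bar\alpha_k\in\mathbb Z$ for all $k$; add the cut $(\gamma\bar\alpha,\gamma)$ as an artificial item to all formulations; re-solve WDP-LP, updating $w^f$ and $x^f$. After the loop, solve: minimize $\sum_j c_jp_j^2$ over $p\ge0$, $s\in\mathbb R^I_{\ge0}$ subject to $p\bm A+s\bm B\ge b$ and $pc+s\bm 1=bx^*$ (with all cuts included as items), and output $p$. *)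

theory Defs
  imports Complex_Main
begin

text \<open>Combinatorial auction data: bids of finite type 'k, items of finite type 'j,
  bidders of finite type 'i.  a k j = number of units of item j in bid k,
  c j = supply of item j, b k = amount of bid k, bidder k = bidder of bid k.  A cut is a pair
  (alpha, alpha0) with alpha :: 'k => real; cut number l of a list cs is the
  artificial item l with "bundle" entries fst (cs!l) k and supply snd (cs!l).\<close>

type_synonym 'k cut = "('k \<Rightarrow> real) \<times> real"

definition feasible_alloc ::
  "('k::finite \<Rightarrow> 'j::finite \<Rightarrow> nat) \<Rightarrow> ('j \<Rightarrow> nat) \<Rightarrow> ('k \<Rightarrow> 'i) \<Rightarrow> ('k \<Rightarrow> real) \<Rightarrow> bool" where
  "feasible_alloc a c bidder x \<longleftrightarrow>
     (\<forall>k. x k \<in> {0, 1}) \<and>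
     (\<forall>j. (\<Sum>k\<in>UNIV. real (a k j) * x k) \<le> real (c j)) \<and>
     (\<forall>i. (\<Sum>k\<in>{k. bidder k = i}. x k) \<le> 1)"

definition wdp_optimal ::
  "('k::finite \<Rightarrow> 'j::finite \<Rightarrow> nat) \<Rightarrow> ('j \<Rightarrow> nat) \<Rightarrow> ('k \<Rightarrow> real) \<Rightarrow> ('k \<Rightarrow> 'i) \<Rightarrow> ('k \<Rightarrow> real) \<Rightarrow> bool" where
  "wdp_optimal a c b bidder xs \<longleftrightarrow> feasible_alloc a c bidder xs \<and>
     (\<forall>x. feasible_alloc a c bidder x \<longrightarrow> (\<Sum>k\<in>UNIV. b k * x k) \<le> (\<Sum>k\<in>UNIV. b k * xs k))"

definition lp_feasible ::
  "('k::finite \<Rightarrow> 'j::finite \<Rightarrow> nat) \<Rightarrow> ('j \<Rightarrow> nat) \<Rightarrow> ('k \<Rightarrow> 'i) \<Rightarrow> 'k cut list \<Rightarrow> ('k \<Rightarrow> real) \<Rightarrow> bool" where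
  "lp_feasible a c bidder cs x \<longleftrightarrow>
     (\<forall>k. 0 \<le> x k \<and> x k \<le> 1) \<and>
     (\<forall>j. (\<Sum>k\<in>UNIV. real (a k j) * x k) \<le> real (c j)) \<and>
     (\<forall>i. (\<Sum>k\<in>{k. bidder k = i}. x k) \<le> 1) \<and>
     (\<forall>l<length cs. (\<Sum>k\<in>UNIV. fst (cs ! l) k * x k) \<le> snd (cs ! l))"

definition lp_value ::
  "('k::finite \<Rightarrow> 'j::finite \<Rightarrow> nat) \<Rightarrow> ('j \<Rightarrow> nat) \<Rightarrow> ('k \<Rightarrow> real) \<Rightarrow> ('k \<Rightarrow> 'i) \<Rightarrow> 'k cut list \<Rightarrow> real" where
  "lp_value a c b bidder cs = Sup ((\<lambda>x. \<Sum>k\<in>UNIV. b k * x k) ` {x. lp_feasible a c bidder cs x})"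

definition lp_optimal ::
  "('k::finite \<Rightarrow> 'j::finite \<Rightarrow> nat) \<Rightarrow> ('j \<Rightarrow> nat) \<Rightarrow> ('k \<Rightarrow> real) \<Rightarrow> ('k \<Rightarrow> 'i) \<Rightarrow> 'k cut list \<Rightarrow> ('k \<Rightarrow> real) \<Rightarrow> bool" where
  "lp_optimal a c b bidder cs x \<longleftrightarrow> lp_feasible a c bidder cs x \<and>
     (\<forall>y. lp_feasible a c bidder cs y \<longrightarrow> (\<Sum>k\<in>UNIV. b k * y k) \<le> (\<Sum>k\<in>UNIV. b k * x k))"

text \<open>Set-maximal feasible allocations (the columns x^l defining D).\<close>
definition maximal_alloc ::
  "('k::finite \<Rightarrow> 'j::finite \<Rightarrow> nat) \<Rightarrow> ('j \<Rightarrow> nat) \<Rightarrow> ('k \<Rightarrow> 'i) \<Rightarrow> ('k \<Rightarrow> real) \<Rightarrow> bool" where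
  "maximal_alloc a c bidder x \<longleftrightarrow> feasible_alloc a c bidder x \<and>
     (\<forall>k. x k = 0 \<longrightarrow> \<not> feasible_alloc a c bidder (x(k := 1)))"

definition sep_feasible ::
  "('k::finite \<Rightarrow> 'j::finite \<Rightarrow> nat) \<Rightarrow> ('j \<Rightarrow> nat) \<Rightarrow> ('k \<Rightarrow> 'i) \<Rightarrow> ('k \<Rightarrow> real) \<Rightarrow> ('k \<Rightarrow> real) \<Rightarrow> bool" where
  "sep_feasible a c bidder xs al \<longleftrightarrow>
     (\<forall>k. 0 \<le> al k) \<and>
     (\<forall>xl. maximal_alloc a c bidder xl \<longrightarrow> 0 \<le> (\<Sum>k\<in>UNIV. al k * (xs k - xl k))) \<and>
     (\<Sum>k\<in>UNIV. al k * xs k) = 1"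

definition is_vertex :: "('k \<Rightarrow> real) set \<Rightarrow> ('k \<Rightarrow> real) \<Rightarrow> bool" where
  "is_vertex S v \<longleftrightarrow> v \<in> S \<and>
     \<not> (\<exists>u\<in>S. \<exists>w\<in>S. u \<noteq> w \<and> (\<exists>t. 0 < t \<and> t < 1 \<and> v = (\<lambda>k. (1 - t) * u k + t * w k)))"

definition sep_solution ::
  "('k::finite \<Rightarrow> 'j::finite \<Rightarrow> nat) \<Rightarrow> ('j \<Rightarrow> nat) \<Rightarrow> ('k \<Rightarrow> 'i) \<Rightarrow> ('k \<Rightarrow> real) \<Rightarrow> ('k \<Rightarrow> real) \<Rightarrow> ('k \<Rightarrow> real) \<Rightarrow> bool" where
  "sep_solution a c bidder xs xf al \<longleftrightarrow>
     is_vertex {be. sep_feasible a c bidder xs be} al \<and>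
     (\<forall>be. sep_feasible a c bidder xs be \<longrightarrow> (\<Sum>k\<in>UNIV. be k * xf k) \<le> (\<Sum>k\<in>UNIV. al k * xf k))"

definition least_scale :: "('k \<Rightarrow> real) \<Rightarrow> real \<Rightarrow> bool" where
  "least_scale al g \<longleftrightarrow> 1 \<le> g \<and> (\<forall>k. g * al k \<in> \<int>) \<and>
     (\<forall>g'. 1 \<le> g' \<and> (\<forall>k. g' * al k \<in> \<int>) \<longrightarrow> g \<le> g')"

definition alg_step ::
  "('k::finite \<Rightarrow> 'j::finite \<Rightarrow> nat) \<Rightarrow> ('j \<Rightarrow> nat) \<Rightarrow> ('k \<Rightarrow> real) \<Rightarrow> ('k \<Rightarrow> 'i) \<Rightarrow> ('k \<Rightarrow> real)
     \<Rightarrow> 'k cut list \<Rightarrow> 'k cut list \<Rightarrow> bool" where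
  "alg_step a c b bidder xs cs cs' \<longleftrightarrow>
     (\<Sum>k\<in>UNIV. b k * xs k) < lp_value a c b bidder cs \<and>
     (\<exists>xf al g. lp_optimal a c b bidder cs xf \<and> sep_solution a c bidder xs xf al \<and>
        least_scale al g \<and> cs' = cs @ [(\<lambda>k. g * al k, g)])"

definition valid_cut ::
  "('k::finite \<Rightarrow> 'j::finite \<Rightarrow> nat) \<Rightarrow> ('j \<Rightarrow> nat) \<Rightarrow> ('k \<Rightarrow> 'i) \<Rightarrow> ('k \<Rightarrow> real) \<Rightarrow> 'k cut \<Rightarrow> bool" where
  "valid_cut a c bidder xs ct \<longleftrightarrow>
     (\<forall>k. 0 \<le> fst ct k) \<and>
     (\<forall>x. feasible_alloc a c bidder x \<longrightarrow> (\<Sum>k\<in>UNIV. fst ct k * x k) \<le> snd ct) \<and>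
     (\<Sum>k\<in>UNIV. fst ct k * xs k) = snd ct"

text \<open>Price of bid k in the augmented auction: p on original items, q l on cut l.\<close>
definition bid_price ::
  "('k::finite \<Rightarrow> 'j::finite \<Rightarrow> nat) \<Rightarrow> 'k cut list \<Rightarrow> ('j \<Rightarrow> real) \<Rightarrow> (nat \<Rightarrow> real) \<Rightarrow> 'k \<Rightarrow> real" where
  "bid_price a cs p q k = (\<Sum>j\<in>UNIV. p j * real (a k j)) + (\<Sum>l<length cs. q l * fst (cs ! l) k)"

definition qp_feasible ::
  "('k::finite \<Rightarrow> 'j::finite \<Rightarrow> nat) \<Rightarrow> ('j \<Rightarrow> nat) \<Rightarrow> ('k \<Rightarrow> real) \<Rightarrow> ('k \<Rightarrow> 'i::finite) \<Rightarrow> ('k \<Rightarrow> real)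
     \<Rightarrow> 'k cut list \<Rightarrow> ('j \<Rightarrow> real) \<Rightarrow> (nat \<Rightarrow> real) \<Rightarrow> ('i \<Rightarrow> real) \<Rightarrow> bool" where
  "qp_feasible a c b bidder xs cs p q s \<longleftrightarrow>
     (\<forall>j. 0 \<le> p j) \<and> (\<forall>l<length cs. 0 \<le> q l) \<and> (\<forall>i. 0 \<le> s i) \<and>
     (\<forall>k. b k \<le> bid_price a cs p q k + s (bidder k)) \<and>
     (\<Sum>j\<in>UNIV. p j * real (c j)) + (\<Sum>l<length cs. q l * snd (cs ! l)) + (\<Sum>i\<in>UNIV. s i)
       = (\<Sum>k\<in>UNIV. b k * xs k)"

definition qp_objective ::
  "('j::finite \<Rightarrow> nat) \<Rightarrow> 'k cut list \<Rightarrow> ('j \<Rightarrow> real) \<Rightarrow> (nat \<Rightarrow> real) \<Rightarrow> real" where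
  "qp_objective c cs p q = (\<Sum>j\<in>UNIV. real (c j) * (p j)\<^sup>2) + (\<Sum>l<length cs. snd (cs ! l) * (q l)\<^sup>2)"

definition qp_optimal ::
  "('k::finite \<Rightarrow> 'j::finite \<Rightarrow> nat) \<Rightarrow> ('j \<Rightarrow> nat) \<Rightarrow> ('k \<Rightarrow> real) \<Rightarrow> ('k \<Rightarrow> 'i::finite) \<Rightarrow> ('k \<Rightarrow> real)
     \<Rightarrow> 'k cut list \<Rightarrow> ('j \<Rightarrow> real) \<Rightarrow> (nat \<Rightarrow> real) \<Rightarrow> ('i \<Rightarrow> real) \<Rightarrow> bool" where
  "qp_optimal a c b bidder xs cs p q s \<longleftrightarrow> qp_feasible a c b bidder xs cs p q s \<and>
     (\<forall>p' q' s'. qp_feasible a c b bidder xs cs p' q' s' \<longrightarrow> qp_objective c cs p q \<le> qp_objective c cs p' q')"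

text \<open>Surplus of bidder i at prices (p,q): b_{i*} - price of a^{i*} (0 if no accepted bid).\<close>
definition surplus ::
  "('k::finite \<Rightarrow> 'j::finite \<Rightarrow> nat) \<Rightarrow> ('k \<Rightarrow> real) \<Rightarrow> ('k \<Rightarrow> 'i) \<Rightarrow> ('k \<Rightarrow> real)
     \<Rightarrow> 'k cut list \<Rightarrow> ('j \<Rightarrow> real) \<Rightarrow> (nat \<Rightarrow> real) \<Rightarrow> 'i \<Rightarrow> real" where
  "surplus a b bidder xs cs p q i = (\<Sum>k\<in>{k. bidder k = i}. xs k * (b k - bid_price a cs p q k))"

definition walrasian_eq ::
  "('k::finite \<Rightarrow> 'j::finite \<Rightarrow> nat) \<Rightarrow> ('j \<Rightarrow> nat) \<Rightarrow> ('k \<Rightarrow> real) \<Rightarrow> ('k \<Rightarrow> 'i) \<Rightarrow> ('k \<Rightarrow> real)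
     \<Rightarrow> 'k cut list \<Rightarrow> ('j \<Rightarrow> real) \<Rightarrow> (nat \<Rightarrow> real) \<Rightarrow> bool" where
  "walrasian_eq a c b bidder xs cs p q \<longleftrightarrow>
     feasible_alloc a c bidder xs \<and>
     (\<forall>l<length cs. (\<Sum>k\<in>UNIV. fst (cs ! l) k * xs k) \<le> snd (cs ! l)) \<and>
     (\<forall>j. 0 \<le> p j) \<and> (\<forall>l<length cs. 0 \<le> q l) \<and>
     (\<forall>i. 0 \<le> surplus a b bidder xs cs p q i) \<and>
     (\<forall>k. b k \<le> bid_price a cs p q k + surplus a b bidder xs cs p q (bidder k)) \<and>
     (\<forall>j. (\<Sum>k\<in>UNIV. real (a k j) * xs k) < real (c j) \<longrightarrow> p j = 0) \<and>
     (\<forall>l<length cs. (\<Sum>k\<in>UNIV. fst (cs ! l) k * xs k) < snd (cs ! l) \<longrightarrow> q l = 0)"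

end

theory Submission
  imports Defs "HOL-Analysis.Analysis"
begin

text \<open>Every cut added by the algorithm is a scaled vertex of the separation polyhedron
  \<open>{\<alpha> \<ge> 0, \<alpha> D \<ge> 0, \<alpha> x* = 1}\<close>.  Its vertices are finitely many and rational,
  so the scale \<open>\<gamma>\<close> exists and only finitely many cuts can ever occur.  The cut added in an
  iteration is violated by the current LP optimum \<open>x\<^sup>f\<close>, because
  \<open>\<alpha> x\<^sup>f \<ge> (b / w) x\<^sup>f = w\<^sup>f / w > 1\<close>, while \<open>x\<^sup>f\<close> satisfies all earlier cuts; so
  each iteration adds a new cut from a finite set, and the loop stops.  At that point \<open>x*\<close>
  is optimal for the LP with all cuts, so by Farkas' lemma the final quadratic program is
  feasible; its feasible set is compact, so it has an optimum, and complementary slackness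
  between \<open>x*\<close> and any feasible \<open>(p, s)\<close> yields the Walrasian equilibrium conditions.\<close>

section \<open>Polyhedra given by finitely many inequalities\<close>

definition dotp :: "('k::finite \<Rightarrow> real) \<Rightarrow> ('k \<Rightarrow> real) \<Rightarrow> real" where
  "dotp g x = (\<Sum>k\<in>UNIV. g k * x k)"

definition polyhedron_of :: "'k::finite cut set \<Rightarrow> ('k \<Rightarrow> real) set" where
  "polyhedron_of C = {x. \<forall>p\<in>C. dotp (fst p) x \<le> snd p}"

definition active :: "'k::finite cut set \<Rightarrow> ('k \<Rightarrow> real) \<Rightarrow> 'k cut set" where
  "active C x = {p\<in>C. dotp (fst p) x = snd p}"

lemma dotp_lincomb: "dotp g (\<lambda>k. s * u k + t * v k) = s * dotp g u + t * dotp g v"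
  unfolding dotp_def by (simp add: sum.distrib sum_distrib_left algebra_simps)

lemma dotp_add_scaled: "dotp g (\<lambda>k. x k + t * d k) = dotp g x + t * dotp g d"
  using dotp_lincomb[of g 1 x t d] by simp

lemma dotp_diff: "dotp g (\<lambda>k. y k - x k) = dotp g y - dotp g x"
  unfolding dotp_def by (simp add: right_diff_distrib sum_subtractf)

lemma dotp_uminus_left: "dotp (\<lambda>k. - g k) x = - dotp g x"
  unfolding dotp_def by (simp add: sum_negf)

lemma dotp_uminus_right: "dotp g (\<lambda>k. - x k) = - dotp g x"
  unfolding dotp_def by (simp add: sum_negf)

lemma dotp_commute: "dotp g x = dotp x g"
  unfolding dotp_def by (simp add: mult.commute)

lemma dotp_indicator: "dotp (indicator A) x = sum x A"
  unfolding dotp_def indicator_def by (simp add: if_distrib sum.If_cases)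

lemma polyhedron_of_Un: "polyhedron_of (A \<union> B) = polyhedron_of A \<inter> polyhedron_of B"
  unfolding polyhedron_of_def by auto

lemma mem_polyhedron_of: "x \<in> polyhedron_of C \<longleftrightarrow> (\<forall>p\<in>C. dotp (fst p) x \<le> snd p)"
  unfolding polyhedron_of_def by simp

lemma mem_polyhedron_of_image:
  "x \<in> polyhedron_of (f ` S) \<longleftrightarrow> (\<forall>s\<in>S. dotp (fst (f s)) x \<le> snd (f s))"
  unfolding polyhedron_of_def by auto

lemma mem_polyhedron_of_insert:
  "x \<in> polyhedron_of (insert p A) \<longleftrightarrow> dotp (fst p) x \<le> snd p \<and> x \<in> polyhedron_of A"
  unfolding polyhedron_of_def by auto

lemma polyhedron_of_empty [simp]: "polyhedron_of {} = UNIV"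
  unfolding polyhedron_of_def by auto

lemma eventually_in_polyhedron_along:
  assumes fin: "finite C" and xP: "x \<in> polyhedron_of C"
    and d: "\<forall>p\<in>active C x. dotp (fst p) d = 0"
  shows "\<forall>\<^sub>F t in at 0. (\<lambda>k. x k + t * d k) \<in> polyhedron_of C"
proof -
  have "\<forall>\<^sub>F t in at 0. dotp (fst p) x + t * dotp (fst p) d \<le> snd p" if pC: "p \<in> C" for p
  proof (cases "p \<in> active C x")
    case True
    then show ?thesis using d by (simp add: active_def)
  next
    case False
    then have slack: "dotp (fst p) x < snd p"
      using xP pC by (auto simp: polyhedron_of_def active_def less_le)
    have "((\<lambda>t. dotp (fst p) x + t * dotp (fst p) d) \<longlongrightarrow> dotp (fst p) x) (at 0)"
      by (auto intro!: tendsto_eq_intros)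
    from order_tendstoD(2)[OF this slack] show ?thesis
      by (rule eventually_mono) simp
  qed
  then show ?thesis
    using fin by (auto simp: polyhedron_of_def dotp_add_scaled eventually_ball_finite_distrib)
qed

lemma vertex_orthogonal_active_zero:
  assumes fin: "finite C" and v: "is_vertex (polyhedron_of C) x"
    and d: "\<forall>p\<in>active C x. dotp (fst p) d = 0"
  shows "d = (\<lambda>_. 0)"
proof (rule ccontr)
  assume "d \<noteq> (\<lambda>_. 0)"
  then obtain k where dk: "d k \<noteq> 0" by auto
  have xP: "x \<in> polyhedron_of C" using v unfolding is_vertex_def by simp
  obtain e where e: "0 < e"
    and inP: "\<And>t. t \<noteq> 0 \<Longrightarrow> \<bar>t\<bar> < e \<Longrightarrow> (\<lambda>k. x k + t * d k) \<in> polyhedron_of C"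
    using eventually_in_polyhedron_along[OF fin xP d] by (auto simp: eventually_at dist_real_def)
  define u where "u = (\<lambda>k. x k + (- e / 2) * d k)"
  define w where "w = (\<lambda>k. x k + (e / 2) * d k)"
  have "u \<in> polyhedron_of C" unfolding u_def by (rule inP) (use e in auto)
  moreover have "w \<in> polyhedron_of C" unfolding w_def by (rule inP) (use e in auto)
  moreover have "u \<noteq> w" using dk e by (auto simp: u_def w_def fun_eq_iff)
  moreover have "\<exists>t. 0 < t \<and> t < 1 \<and> x = (\<lambda>k. (1 - t) * u k + t * w k)"
    by (rule exI[of _ "1/2"]) (auto simp: u_def w_def algebra_simps)
  ultimately show False
    using v unfolding is_vertex_def by blast
qed

lemma finite_vertices:
  assumes fin: "finite C"
  shows "finite {x. is_vertex (polyhedron_of C) x}"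
proof -
  have "inj_on (active C) {x. is_vertex (polyhedron_of C) x}"
  proof (rule inj_onI)
    fix x y
    assume x: "x \<in> {x. is_vertex (polyhedron_of C) x}" and eq: "active C x = active C y"
    have "\<forall>p\<in>active C x. dotp (fst p) (\<lambda>k. y k - x k) = 0"
    proof
      fix p assume "p \<in> active C x"
      moreover from this have "p \<in> active C y" using eq by simp
      ultimately show "dotp (fst p) (\<lambda>k. y k - x k) = 0" by (simp add: active_def dotp_diff)
    qed
    then have "(\<lambda>k. y k - x k) = (\<lambda>_. 0)"
      using vertex_orthogonal_active_zero[OF fin] x by blast
    then show "x = y" by (simp add: fun_eq_iff)
  qed
  moreover have "active C ` {x. is_vertex (polyhedron_of C) x} \<subseteq> Pow C"
    by (auto simp: active_def)
  ultimately show ?thesis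
    using fin by (metis finite_Pow_iff finite_imageD finite_subset)
qed

lemma nonvertex_direction:
  assumes xP: "x \<in> polyhedron_of C" and nv: "\<not> is_vertex (polyhedron_of C) x"
  shows "\<exists>d. d \<noteq> (\<lambda>_. 0) \<and> (\<forall>p\<in>active C x. dotp (fst p) d = 0)"
proof -
  obtain u w t where uP: "u \<in> polyhedron_of C" and wP: "w \<in> polyhedron_of C" and "u \<noteq> w"
    and t: "0 < t" "t < 1" and x: "x = (\<lambda>k. (1 - t) * u k + t * w k)"
    using xP nv unfolding is_vertex_def by blast
  have "dotp (fst p) (\<lambda>k. w k - u k) = 0" if p: "p \<in> active C x" for p
  proof -
    have "p \<in> C" and tight: "dotp (fst p) x = snd p" using p by (auto simp: active_def)
    then have "0 \<le> (1 - t) * (snd p - dotp (fst p) u)" "0 \<le> t * (snd p - dotp (fst p) w)"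
      using uP wP t by (auto simp: polyhedron_of_def)
    moreover have "dotp (fst p) x = (1 - t) * dotp (fst p) u + t * dotp (fst p) w"
      unfolding x by (rule dotp_lincomb)
    then have "(1 - t) * (snd p - dotp (fst p) u) + t * (snd p - dotp (fst p) w) = 0"
      using tight by (simp add: algebra_simps)
    ultimately have "(1 - t) * (snd p - dotp (fst p) u) = 0" "t * (snd p - dotp (fst p) w) = 0"
      by linarith+
    with t have "dotp (fst p) u = snd p" "dotp (fst p) w = snd p"
      by auto
    then show ?thesis by (simp add: dotp_diff)
  qed
  moreover have "(\<lambda>k. w k - u k) \<noteq> (\<lambda>_. 0)"
    using \<open>u \<noteq> w\<close> by (metis (no_types) eq_iff_diff_eq_0 ext)
  ultimately show ?thesis by blast
qed

lemma bounded_polyhedron_blocks_direction: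
  assumes bnd: "\<forall>y\<in>polyhedron_of C. \<forall>k. \<bar>y k\<bar> \<le> B"
    and xP: "x \<in> polyhedron_of C" and "e \<noteq> (\<lambda>_. 0)"
  shows "\<exists>p\<in>C. 0 < dotp (fst p) e"
proof (rule ccontr)
  assume "\<not> ?thesis"
  then have nonpos: "\<forall>p\<in>C. dotp (fst p) e \<le> 0" by auto
  obtain k where ek: "e k \<noteq> 0" using \<open>e \<noteq> (\<lambda>_. 0)\<close> by auto
  define s where "s = (\<bar>B\<bar> + \<bar>x k\<bar> + 1) / \<bar>e k\<bar>"
  have "s \<ge> 0" by (simp add: s_def)
  have "(\<lambda>k. x k + s * e k) \<in> polyhedron_of C"
    unfolding polyhedron_of_def mem_Collect_eq dotp_add_scaled
  proof
    fix p assume "p \<in> C"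
    then have "dotp (fst p) x \<le> snd p" "s * dotp (fst p) e \<le> 0"
      using xP nonpos \<open>s \<ge> 0\<close> by (auto simp: polyhedron_of_def mult_nonneg_nonpos)
    then show "dotp (fst p) x + s * dotp (fst p) e \<le> snd p" by linarith
  qed
  then have "\<bar>x k + s * e k\<bar> \<le> B" using bnd by fast
  moreover have "\<bar>s * e k\<bar> = \<bar>B\<bar> + \<bar>x k\<bar> + 1"
    using ek by (simp add: s_def abs_mult)
  ultimately show False by linarith
qed

lemma ray_reaches_new_active_constraint:
  assumes fin: "finite C" and bnd: "\<forall>y\<in>polyhedron_of C. \<forall>k. \<bar>y k\<bar> \<le> B"
    and xP: "x \<in> polyhedron_of C" and "e \<noteq> (\<lambda>_. 0)"
    and e: "\<forall>p\<in>active C x. dotp (fst p) e = 0"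
  shows "\<exists>s\<ge>0. (\<lambda>k. x k + s * e k) \<in> polyhedron_of C
                \<and> active C x \<subset> active C (\<lambda>k. x k + s * e k)"
proof -
  define S where "S = {p\<in>C. 0 < dotp (fst p) e}"
  define ratio where "ratio p = (snd p - dotp (fst p) x) / dotp (fst p) e" for p
  have "finite S" "S \<noteq> {}"
    using fin bounded_polyhedron_blocks_direction[OF bnd xP \<open>e \<noteq> (\<lambda>_. 0)\<close>] by (auto simp: S_def)
  then obtain p0 where p0S: "p0 \<in> S" and p0_min: "\<And>p. p \<in> S \<Longrightarrow> ratio p0 \<le> ratio p"
    using ex_is_arg_min_if_finite[of S ratio] by (auto simp: is_arg_min_linorder)
  define s where "s = ratio p0"
  define y where "y = (\<lambda>k. x k + s * e k)"
  have p0: "p0 \<in> C" "0 < dotp (fst p0) e" using p0S by (auto simp: S_def)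
  have "s \<ge> 0"
    using p0 xP by (auto simp: s_def ratio_def polyhedron_of_def)
  have "dotp (fst p) y \<le> snd p" if pC: "p \<in> C" for p
  proof (cases "0 < dotp (fst p) e")
    case True
    then have "s \<le> ratio p" using pC p0_min by (simp add: s_def S_def)
    then show ?thesis using True by (simp add: y_def dotp_add_scaled ratio_def le_divide_eq)
  next
    case False
    then have "s * dotp (fst p) e \<le> 0" using \<open>s \<ge> 0\<close> by (simp add: mult_nonneg_nonpos)
    moreover have "dotp (fst p) x \<le> snd p" using xP pC by (simp add: polyhedron_of_def)
    ultimately show ?thesis unfolding y_def dotp_add_scaled by linarith
  qed
  then have "y \<in> polyhedron_of C" by (simp add: polyhedron_of_def)
  moreover have "active C x \<subseteq> active C y"
    using e by (auto simp: active_def y_def dotp_add_scaled)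
  moreover have "p0 \<in> active C y"
    using p0 unfolding active_def y_def dotp_add_scaled by (simp add: s_def ratio_def)
  moreover have "p0 \<notin> active C x"
    using p0 e by auto
  ultimately show ?thesis using \<open>s \<ge> 0\<close> unfolding y_def by blast
qed

lemma exists_vertex_ge:
  assumes fin: "finite C" and bnd: "\<forall>y\<in>polyhedron_of C. \<forall>k. \<bar>y k\<bar> \<le> B"
  shows "x \<in> polyhedron_of C \<Longrightarrow> \<exists>v. is_vertex (polyhedron_of C) v \<and> dotp c x \<le> dotp c v"
proof (induction "card (C - active C x)" arbitrary: x rule: less_induct)
  case less
  show ?case
  proof (cases "is_vertex (polyhedron_of C) x")
    case False
    then obtain d where d: "d \<noteq> (\<lambda>_. 0)" "\<forall>p\<in>active C x. dotp (fst p) d = 0"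
      using nonvertex_direction[OF less.prems] by blast
    define e where "e = (if 0 \<le> dotp c d then d else (\<lambda>k. - d k))"
    have "e \<noteq> (\<lambda>_. 0)" "\<forall>p\<in>active C x. dotp (fst p) e = 0" "0 \<le> dotp c e"
      using d by (auto simp: e_def fun_eq_iff dotp_uminus_right)
    then obtain s where "s \<ge> 0" and yP: "(\<lambda>k. x k + s * e k) \<in> polyhedron_of C"
      and grow: "active C x \<subset> active C (\<lambda>k. x k + s * e k)"
      using ray_reaches_new_active_constraint[OF fin bnd less.prems] by blast
    have "card (C - active C (\<lambda>k. x k + s * e k)) < card (C - active C x)"
      using fin grow by (intro psubset_card_mono) (auto simp: active_def)
    then obtain v where "is_vertex (polyhedron_of C) v" "dotp c (\<lambda>k. x k + s * e k) \<le> dotp c v"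
      using less.hyps yP by blast
    moreover have "dotp c x \<le> dotp c (\<lambda>k. x k + s * e k)"
      using \<open>s \<ge> 0\<close> \<open>0 \<le> dotp c e\<close> by (simp add: dotp_add_scaled)
    ultimately show ?thesis by force
  qed auto
qed

lemma exists_optimal_vertex:
  assumes fin: "finite C" and bnd: "\<forall>y\<in>polyhedron_of C. \<forall>k. \<bar>y k\<bar> \<le> B"
    and ne: "x0 \<in> polyhedron_of C"
  shows "\<exists>v. is_vertex (polyhedron_of C) v \<and> (\<forall>x\<in>polyhedron_of C. dotp c x \<le> dotp c v)"
proof -
  define V where "V = {x. is_vertex (polyhedron_of C) x}"
  have "finite V" "V \<noteq> {}"
    using finite_vertices[OF fin] exists_vertex_ge[OF fin bnd ne] by (auto simp: V_def)
  then obtain v where vV: "v \<in> V" and vmax: "\<And>u. u \<in> V \<Longrightarrow> dotp c u \<le> dotp c v"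
    using ex_is_arg_min_if_finite[of V "\<lambda>u. - dotp c u"] by (auto simp: is_arg_min_linorder)
  have "dotp c x \<le> dotp c v" if "x \<in> polyhedron_of C" for x
    using exists_vertex_ge[OF fin bnd that, of c] vmax by (force simp: V_def)
  then show ?thesis using vV by (auto simp: V_def)
qed

section \<open>Rational vertices and integral scaling\<close>

lemma exists_rat_linear_projection:
  "\<exists>\<psi>::real \<Rightarrow> real. (\<forall>x y. \<psi> (x + y) = \<psi> x + \<psi> y) \<and> (\<forall>q x. \<psi> (of_rat q * x) = of_rat q * \<psi> x)
     \<and> \<psi> 1 = 1 \<and> (\<forall>x. \<psi> x \<in> \<rat>)"
proof -
  interpret Q: vector_space "\<lambda>(q::rat) (x::real). of_rat q * x"
    by unfold_locales (auto simp: algebra_simps of_rat_add of_rat_mult)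
  have ind1: "Q.independent {1}"
    by (rule Q.independent_insertI) (auto simp: Q.independent_empty)
  define B where "B = Q.extend_basis {1}"
  have indB: "Q.independent B" unfolding B_def by (rule Q.independent_extend_basis[OF ind1])
  have spB: "Q.span B = UNIV" unfolding B_def by (rule Q.span_extend_basis[OF ind1])
  have oneB: "1 \<in> B" unfolding B_def using Q.extend_basis_superset[OF ind1] by auto
  \<comment> \<open>the coordinate of the basis vector \<open>1\<close> in a Hamel basis of \<open>\<real>\<close> over \<open>\<rat>\<close>\<close>
  define \<psi> :: "real \<Rightarrow> real" where "\<psi> x = of_rat (Q.representation B x 1)" for x
  have "\<psi> (x + y) = \<psi> x + \<psi> y" for x y
    unfolding \<psi>_def using Q.representation_add[OF indB, of y x] spB by (simp add: of_rat_add)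
  moreover have "\<psi> (of_rat q * x) = of_rat q * \<psi> x" for q x
    unfolding \<psi>_def using Q.representation_scale[OF indB, of x q] spB by (simp add: of_rat_mult)
  moreover have "\<psi> 1 = 1"
    unfolding \<psi>_def using Q.representation_basis[OF indB oneB] by simp
  moreover have "\<psi> x \<in> \<rat>" for x
    unfolding \<psi>_def by simp
  ultimately show ?thesis by blast
qed

lemma vertex_rational:
  assumes fin: "finite C" and v: "is_vertex (polyhedron_of C) x"
    and rat: "\<forall>p\<in>C. snd p \<in> \<rat> \<and> (\<forall>k. fst p k \<in> \<rat>)"
  shows "x k \<in> \<rat>"
proof -
  obtain \<psi> :: "real \<Rightarrow> real" where add: "\<And>x y. \<psi> (x + y) = \<psi> x + \<psi> y"
    and scale: "\<And>q x. \<psi> (of_rat q * x) = of_rat q * \<psi> x" and "\<psi> 1 = 1"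
    and range: "\<And>x. \<psi> x \<in> \<rat>"
    using exists_rat_linear_projection by blast
  have scale': "\<psi> (r * y) = r * \<psi> y" if "r \<in> \<rat>" for r y
    using that scale by (metis Rats_cases)
  then have fix_rat: "\<psi> r = r" if "r \<in> \<rat>" for r
    using that \<open>\<psi> 1 = 1\<close> by (metis mult.right_neutral)
  have "\<psi> 0 = 0" using add[of 0 0] by simp
  then have sum: "\<psi> (sum f A) = (\<Sum>a\<in>A. \<psi> (f a))" for f :: "'k \<Rightarrow> real" and A
    by (induction A rule: infinite_finite_induct) (auto simp: add)
  \<comment> \<open>applying \<open>\<psi>\<close> coordinatewise fixes every active constraint, so it cannot move the vertex\<close>
  have "(\<lambda>k. \<psi> (x k) - x k) = (\<lambda>_. 0)"
  proof (rule vertex_orthogonal_active_zero[OF fin v], rule ballI)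
    fix p assume "p \<in> active C x"
    then have pC: "p \<in> C" and tight: "dotp (fst p) x = snd p" by (auto simp: active_def)
    have "dotp (fst p) (\<lambda>k. \<psi> (x k)) = \<psi> (dotp (fst p) x)"
      unfolding dotp_def sum using rat pC by (simp add: scale')
    also have "\<dots> = snd p" using tight fix_rat rat pC by simp
    finally show "dotp (fst p) (\<lambda>k. \<psi> (x k) - x k) = 0" using tight by (simp add: dotp_diff)
  qed
  then have "x k = \<psi> (x k)" by (metis eq_iff_diff_eq_0)
  then show ?thesis using range by metis
qed

lemma common_denominator:
  fixes al :: "'k::finite \<Rightarrow> real"
  assumes "\<forall>k. al k \<in> \<rat>"
  shows "\<exists>D::int. 0 < D \<and> (\<forall>k. of_int D * al k \<in> \<int>)"
proof -
  have "\<exists>d::int. 0 < d \<and> of_int d * al k \<in> \<int>" for k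
  proof -
    obtain m n where "n > 0" "al k = of_int m / of_int n"
      using assms Rats_cases' by meson
    then show ?thesis by (intro exI[of _ n]) simp
  qed
  then obtain d :: "'k \<Rightarrow> int" where d: "\<And>k. 0 < d k \<and> of_int (d k) * al k \<in> \<int>"
    by metis
  have "of_int (prod d UNIV) * al k \<in> \<int>" for k
  proof -
    have "of_int (prod d UNIV) * al k = (of_int (d k) * al k) * of_int (prod d (UNIV - {k}))"
      by (simp add: prod.remove[of UNIV k] algebra_simps)
    then show ?thesis using d[of k] by (metis Ints_mult Ints_of_int)
  qed
  moreover have "0 < prod d UNIV" using d by (simp add: prod_pos)
  ultimately show ?thesis by blast
qed

lemma least_scale_exists:
  fixes al :: "'k::finite \<Rightarrow> real"
  assumes rat: "\<forall>k. al k \<in> \<rat>" and nz: "al k0 \<noteq> 0"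
  shows "\<exists>g. least_scale al g"
proof -
  define G where "G = {g. 1 \<le> g \<and> (\<forall>k. g * al k \<in> \<int>)}"
  define m where "m = \<bar>al k0\<bar>"
  have "m > 0" using nz by (simp add: m_def)
  \<comment> \<open>\<open>g \<mapsto> g * m\<close> maps \<open>G\<close> monotonically into the naturals, so \<open>G\<close> has a least element\<close>
  have nat_image: "\<exists>n::nat. g * m = real n" if "g \<in> G" for g
  proof -
    have "g * m \<in> \<int>" "0 \<le> g * m"
      using that \<open>m > 0\<close> by (auto simp: G_def m_def abs_mult[symmetric] abs_if)
    then show ?thesis by (metis Ints_cases of_int_0_le_iff of_nat_nat)
  qed
  obtain D :: int where "0 < D" "\<forall>k. of_int D * al k \<in> \<int>"
    using common_denominator[OF rat] by blast
  then have "of_int D \<in> G" by (simp add: G_def)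
  define N where "N = (LEAST n::nat. \<exists>g\<in>G. g * m = real n)"
  obtain g0 where g0: "g0 \<in> G" "g0 * m = real N"
    using LeastI_ex[of "\<lambda>n::nat. \<exists>g\<in>G. g * m = real n"] nat_image \<open>of_int D \<in> G\<close>
    unfolding N_def by blast
  have "g0 \<le> g" if gG: "g \<in> G" for g
  proof -
    obtain n where n: "g * m = real n" using nat_image[OF gG] by blast
    then have "N \<le> n" unfolding N_def using gG by (blast intro: Least_le)
    then have "g0 * m \<le> g * m" using g0 n by simp
    then show ?thesis using \<open>m > 0\<close> by simp
  qed
  then have "least_scale al g0" using g0 by (auto simp: least_scale_def G_def)
  then show ?thesis by blast
qed

lemma least_scale_unique: "least_scale al g \<Longrightarrow> least_scale al g' \<Longrightarrow> g = g'"
  unfolding least_scale_def by (meson order_antisym)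

section \<open>Farkas' lemma\<close>

lemma convex_cone_hull_image_subset_nonneg_sums:
  fixes gen :: "'r \<Rightarrow> 'a::real_vector"
  assumes fin: "finite R"
  shows "convex_cone hull (gen ` R) \<subseteq> {(\<Sum>r\<in>R. y r *\<^sub>R gen r) | y. \<forall>r\<in>R. 0 \<le> y r}"
proof (rule hull_minimal)
  show "gen ` R \<subseteq> {(\<Sum>r\<in>R. y r *\<^sub>R gen r) | y. \<forall>r\<in>R. 0 \<le> y r}"
  proof
    fix x assume "x \<in> gen ` R"
    then obtain r where "r \<in> R" "x = gen r" by blast
    then have "x = (\<Sum>r'\<in>R. (if r' = r then 1 else 0) *\<^sub>R gen r')"
      using fin by (simp add: if_distrib[of "\<lambda>c. c *\<^sub>R _"] cong: if_cong)
    then show "x \<in> {(\<Sum>r\<in>R. y r *\<^sub>R gen r) | y. \<forall>r\<in>R. 0 \<le> y r}" by fastforce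
  qed
  show "convex_cone {(\<Sum>r\<in>R. y r *\<^sub>R gen r) | y. \<forall>r\<in>R. 0 \<le> y r}"
    unfolding convex_cone_iff
    by (auto 0 4 intro: exI[of _ "\<lambda>_. 0"] exI[of _ "\<lambda>r. _ r + _ r"] exI[of _ "\<lambda>r. _ * _ r"]
        simp: sum.distrib scaleR_add_left scaleR_sum_right)
qed

lemma farkas_cone:
  fixes gen :: "'r \<Rightarrow> 'a::euclidean_space"
  assumes fin: "finite R"
    and dual: "\<And>v. (\<forall>r\<in>R. 0 \<le> v \<bullet> gen r) \<Longrightarrow> 0 \<le> v \<bullet> z"
  shows "\<exists>y. (\<forall>r\<in>R. 0 \<le> y r) \<and> z = (\<Sum>r\<in>R. y r *\<^sub>R gen r)"
proof -
  define K where "K = convex_cone hull (gen ` R)"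
  have "z \<in> K"
  proof (rule ccontr)
    assume "z \<notin> K"
    moreover have "convex K" "closed K"
      using fin by (simp_all add: K_def convex_convex_cone_hull closed_convex_cone_hull)
    ultimately obtain v \<beta> where vz: "v \<bullet> z < \<beta>" and vK: "\<forall>x\<in>K. \<beta> < v \<bullet> x"
      using separating_hyperplane_closed_point by blast
    have "\<beta> < 0" using vK convex_cone_hull_contains_0 by (fastforce simp: K_def)
    have "0 \<le> v \<bullet> gen r" if "r \<in> R" for r
    proof (rule ccontr)
      assume neg: "\<not> 0 \<le> v \<bullet> gen r"
      have "(\<beta> / (v \<bullet> gen r)) *\<^sub>R gen r \<in> K"
        unfolding K_def using that neg \<open>\<beta> < 0\<close>
        by (intro convex_cone_hull_mul hull_inc) (auto simp: divide_nonpos_neg)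
      then have "\<beta> < \<beta>" using vK neg by fastforce
      then show False by simp
    qed
    then show False using dual vz \<open>\<beta> < 0\<close> by fastforce
  qed
  then show ?thesis
    using convex_cone_hull_image_subset_nonneg_sums[OF fin] unfolding K_def by blast
qed

lemma farkas_dotp:
  fixes M :: "'r \<Rightarrow> 'n::finite \<Rightarrow> real"
  assumes fin: "finite R"
    and dual: "\<And>v. (\<forall>r\<in>R. 0 \<le> dotp v (M r)) \<Longrightarrow> 0 \<le> dotp v z"
  shows "\<exists>y. (\<forall>r\<in>R. 0 \<le> y r) \<and> (\<forall>n. z n = (\<Sum>r\<in>R. y r * M r n))"
proof -
  have inner_eq: "v \<bullet> vec_lambda f = dotp (vec_nth v) f" for v :: "real ^ 'n" and f
    by (simp add: inner_vec_def dotp_def)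
  obtain y where "\<forall>r\<in>R. 0 \<le> y r" "vec_lambda z = (\<Sum>r\<in>R. y r *\<^sub>R vec_lambda (M r))"
    using farkas_cone[OF fin, of "\<lambda>r. vec_lambda (M r)" "vec_lambda z"] dual
    unfolding inner_eq by blast
  then show ?thesis
    by (intro exI[of _ y]) (auto dest: arg_cong[of _ _ "\<lambda>u. u $ _"])
qed

section \<open>Allocations and the linear programs of the algorithm\<close>

lemma feasible_alloc_01: "feasible_alloc a c bidder x \<Longrightarrow> 0 \<le> x k \<and> x k \<le> 1"
  unfolding feasible_alloc_def by (metis insert_iff order.refl singletonD zero_le_one)

lemma finite_feasible_allocs: "finite {x. feasible_alloc a c bidder x}"
proof -
  have "{x. feasible_alloc a c bidder x} \<subseteq> Pi\<^sub>E UNIV (\<lambda>_. {0, 1})"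
    by (auto simp: feasible_alloc_def PiE_def extensional_def)
  then show ?thesis by (rule finite_subset) (simp add: finite_PiE)
qed

lemma dotp_indicator_singleton: "dotp g (indicator {k0}) = g k0"
  by (simp add: dotp_commute[of g] dotp_indicator)

lemma feasible_alloc_indicator:
  assumes "\<forall>k j. a k j \<le> c j"
  shows "feasible_alloc a c bidder (indicator {k0})"
  unfolding feasible_alloc_def
proof (intro conjI allI)
  show "indicator {k0} k \<in> {0, 1 :: real}" for k by (simp add: indicator_def)
  show "(\<Sum>k\<in>UNIV. real (a k j) * indicator {k0} k) \<le> real (c j)" for j
    using assms dotp_indicator_singleton[of "\<lambda>k. real (a k j)" k0] by (simp add: dotp_def)
  fix i
  have "(\<Sum>k\<in>{k. bidder k = i}. indicator {k0} k) \<le> (\<Sum>k\<in>UNIV. indicator {k0} k :: real)"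
    by (rule sum_mono2) auto
  also have "\<dots> = 1" by (simp add: indicator_def)
  finally show "(\<Sum>k\<in>{k. bidder k = i}. indicator {k0} k) \<le> (1 :: real)" .
qed

lemma exists_maximal_alloc_ge:
  assumes "feasible_alloc a c bidder x"
  shows "\<exists>xl. maximal_alloc a c bidder xl \<and> (\<forall>k. x k \<le> xl k)"
proof -
  define F where "F = {y. feasible_alloc a c bidder y \<and> (\<forall>k. x k \<le> y k)}"
  have "finite F"
    by (rule finite_subset[OF _ finite_feasible_allocs]) (auto simp: F_def)
  moreover have "x \<in> F" using assms by (simp add: F_def)
  ultimately obtain y where yF: "y \<in> F" and ymax: "\<And>y'. y' \<in> F \<Longrightarrow> sum y' UNIV \<le> sum y UNIV"
    using ex_is_arg_min_if_finite[of F "\<lambda>y. - sum y UNIV"] by (auto simp: is_arg_min_linorder)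
  have "maximal_alloc a c bidder y"
    unfolding maximal_alloc_def
  proof (intro conjI allI impI notI)
    show "feasible_alloc a c bidder y" using yF by (simp add: F_def)
    fix k assume "y k = 0" and feas: "feasible_alloc a c bidder (y(k := 1))"
    then have "y(k := 1) \<in> F" using yF assms by (auto simp: F_def dest: feasible_alloc_01)
    moreover have "sum y UNIV < sum (y(k := 1)) UNIV"
      using \<open>y k = 0\<close> by (intro sum_strict_mono_ex1) auto
    ultimately show False using ymax by fastforce
  qed
  then show ?thesis using yF by (auto simp: F_def)
qed

lemma finite_maximal_allocs: "finite {xl. maximal_alloc a c bidder xl}"
  by (rule finite_subset[OF _ finite_feasible_allocs]) (auto simp: maximal_alloc_def)

definition sep_constraints ::
  "('k::finite \<Rightarrow> 'j::finite \<Rightarrow> nat) \<Rightarrow> ('j \<Rightarrow> nat) \<Rightarrow> ('k \<Rightarrow> 'i) \<Rightarrow> ('k \<Rightarrow> real) \<Rightarrow> 'k cut set" where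
  "sep_constraints a c bidder xs =
     range (\<lambda>k. (\<lambda>k'. - indicator {k} k', 0))
     \<union> (\<lambda>xl. (\<lambda>k. xl k - xs k, 0)) ` {xl. maximal_alloc a c bidder xl}
     \<union> {(xs, 1), (\<lambda>k. - xs k, -1)}"

definition lp_constraints ::
  "('k::finite \<Rightarrow> 'j::finite \<Rightarrow> nat) \<Rightarrow> ('j \<Rightarrow> nat) \<Rightarrow> ('k \<Rightarrow> 'i::finite) \<Rightarrow> 'k cut list \<Rightarrow> 'k cut set" where
  "lp_constraints a c bidder cs =
     range (\<lambda>k. (\<lambda>k'. - indicator {k} k', 0)) \<union> range (\<lambda>k. (indicator {k}, 1))
     \<union> range (\<lambda>j. (\<lambda>k. real (a k j), real (c j)))
     \<union> range (\<lambda>i. (indicator {k. bidder k = i}, 1)) \<union> set cs"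

lemma finite_sep_constraints: "finite (sep_constraints a c bidder xs)"
  unfolding sep_constraints_def using finite_maximal_allocs by auto

lemma finite_lp_constraints: "finite (lp_constraints a c bidder cs)"
  unfolding lp_constraints_def by auto

lemma dotp_neg_indicator: "dotp (\<lambda>k'. - indicator {k} k') x = - x k"
  by (simp add: dotp_uminus_left[of "indicator {k}"] dotp_indicator)

lemma sep_feasible_iff_polyhedron:
  "sep_feasible a c bidder xs al \<longleftrightarrow> al \<in> polyhedron_of (sep_constraints a c bidder xs)"
proof -
  have "(\<Sum>k\<in>UNIV. al k * (xs k - xl k)) = - dotp (\<lambda>k. xl k - xs k) al" for xl
    unfolding dotp_def by (simp add: sum_negf[symmetric] algebra_simps)
  moreover have "(\<Sum>k\<in>UNIV. al k * xs k) = dotp xs al"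
    by (simp add: dotp_commute dotp_def)
  ultimately show ?thesis
    unfolding sep_feasible_def sep_constraints_def polyhedron_of_Un Int_iff mem_polyhedron_of_image
      mem_polyhedron_of_insert
    by (auto simp: dotp_neg_indicator dotp_uminus_left)
qed

lemma lp_feasible_iff_polyhedron:
  "lp_feasible a c bidder cs x \<longleftrightarrow> x \<in> polyhedron_of (lp_constraints a c bidder cs)"
proof -
  have "(\<forall>l<length cs. (\<Sum>k\<in>UNIV. fst (cs ! l) k * x k) \<le> snd (cs ! l)) \<longleftrightarrow>
        (\<forall>p\<in>set cs. dotp (fst p) x \<le> snd p)"
    unfolding dotp_def by (simp add: all_set_conv_all_nth)
  then show ?thesis
    unfolding lp_feasible_def lp_constraints_def polyhedron_of_Un Int_iff mem_polyhedron_of_image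
    by (auto simp: mem_polyhedron_of dotp_neg_indicator dotp_indicator_singleton dotp_indicator dotp_def)
qed

lemma sep_feasible_le_one:
  assumes sep: "sep_feasible a c bidder xs al" and feas: "feasible_alloc a c bidder x"
  shows "(\<Sum>k\<in>UNIV. al k * x k) \<le> 1"
proof -
  have nonneg: "\<forall>k. 0 \<le> al k" and one: "(\<Sum>k\<in>UNIV. al k * xs k) = 1"
    and D: "\<And>xl. maximal_alloc a c bidder xl \<Longrightarrow> 0 \<le> (\<Sum>k\<in>UNIV. al k * (xs k - xl k))"
    using sep by (auto simp: sep_feasible_def)
  obtain xl where max: "maximal_alloc a c bidder xl" and "\<forall>k. x k \<le> xl k"
    using exists_maximal_alloc_ge[OF feas] by blast
  then have "(\<Sum>k\<in>UNIV. al k * x k) \<le> (\<Sum>k\<in>UNIV. al k * xl k)"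
    using nonneg by (intro sum_mono mult_left_mono) auto
  also have "\<dots> \<le> 1"
    using D[OF max] one by (simp add: right_diff_distrib sum_subtractf)
  finally show ?thesis .
qed

lemma sep_feasible_bounded:
  assumes sep: "sep_feasible a c bidder xs al" and "\<forall>k j. a k j \<le> c j"
  shows "0 \<le> al k \<and> al k \<le> 1"
proof -
  have "al k = (\<Sum>k'\<in>UNIV. al k' * indicator {k} k')"
    using dotp_indicator_singleton[of al k] by (simp add: dotp_def)
  also have "\<dots> \<le> 1"
    using sep_feasible_le_one[OF sep feasible_alloc_indicator[OF assms(2)]] .
  finally show ?thesis using sep by (simp add: sep_feasible_def)
qed

lemma sep_constraints_rational:
  assumes "feasible_alloc a c bidder xs"
  shows "\<forall>p\<in>sep_constraints a c bidder xs. snd p \<in> \<rat> \<and> (\<forall>k. fst p k \<in> \<rat>)"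
proof -
  have 01: "v \<in> {0, 1} \<Longrightarrow> v \<in> \<rat>" for v :: real by auto
  have "xs k \<in> \<rat>" for k using assms 01 by (auto simp: feasible_alloc_def)
  moreover have "xl k \<in> \<rat>" if "maximal_alloc a c bidder xl" for xl k
    using that 01 by (auto simp: maximal_alloc_def feasible_alloc_def)
  ultimately show ?thesis
    unfolding sep_constraints_def by (auto simp: indicator_def)
qed

lemma lp_value_eq: "lp_optimal a c b bidder cs xf \<Longrightarrow> lp_value a c b bidder cs = (\<Sum>k\<in>UNIV. b k * xf k)"
  unfolding lp_optimal_def lp_value_def by (intro cSup_eq_maximum) auto

lemma sep_solution_feasible: "sep_solution a c bidder xs xf al \<Longrightarrow> sep_feasible a c bidder xs al"
  unfolding sep_solution_def is_vertex_def by simp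

lemma sep_feasible_set: "{al. sep_feasible a c bidder xs al} = polyhedron_of (sep_constraints a c bidder xs)"
  using sep_feasible_iff_polyhedron by blast

lemma valid_cut_of_sep_feasible:
  assumes sep: "sep_feasible a c bidder xs al" and "1 \<le> g"
  shows "valid_cut a c bidder xs (\<lambda>k. g * al k, g)"
  using sep_feasible_le_one[OF sep] sep \<open>1 \<le> g\<close>
  by (auto simp: valid_cut_def sep_feasible_def mult.assoc sum_distrib_left[symmetric])

section \<open>Duality for the auction augmented by cuts\<close>

definition dual_feasible ::
  "('k::finite \<Rightarrow> 'j::finite \<Rightarrow> nat) \<Rightarrow> ('k \<Rightarrow> real) \<Rightarrow> ('k \<Rightarrow> 'i) \<Rightarrow> 'k cut list
     \<Rightarrow> ('j \<Rightarrow> real) \<Rightarrow> (nat \<Rightarrow> real) \<Rightarrow> ('i \<Rightarrow> real) \<Rightarrow> bool" where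
  "dual_feasible a b bidder cs p q s \<longleftrightarrow>
     (\<forall>j. 0 \<le> p j) \<and> (\<forall>l<length cs. 0 \<le> q l) \<and> (\<forall>i. 0 \<le> s i) \<and>
     (\<forall>k. b k \<le> bid_price a cs p q k + s (bidder k))"

definition dual_value ::
  "('j::finite \<Rightarrow> nat) \<Rightarrow> 'k cut list \<Rightarrow> ('j \<Rightarrow> real) \<Rightarrow> (nat \<Rightarrow> real) \<Rightarrow> ('i::finite \<Rightarrow> real) \<Rightarrow> real" where
  "dual_value c cs p q s =
     (\<Sum>j\<in>UNIV. p j * real (c j)) + (\<Sum>l<length cs. q l * snd (cs ! l)) + (\<Sum>i\<in>UNIV. s i)"

lemma qp_feasible_iff:
  "qp_feasible a c b bidder xs cs p q s \<longleftrightarrow>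
     dual_feasible a b bidder cs p q s \<and> dual_value c cs p q s = (\<Sum>k\<in>UNIV. b k * xs k)"
  unfolding qp_feasible_def dual_feasible_def dual_value_def by auto

lemma sum_weighted_bid_price:
  "(\<Sum>k\<in>UNIV. x k * bid_price a cs p q k) =
     (\<Sum>j\<in>UNIV. p j * (\<Sum>k\<in>UNIV. real (a k j) * x k))
     + (\<Sum>l<length cs. q l * (\<Sum>k\<in>UNIV. fst (cs ! l) k * x k))"
proof -
  have "(\<Sum>k\<in>UNIV. x k * bid_price a cs p q k) =
      (\<Sum>k\<in>UNIV. \<Sum>j\<in>UNIV. p j * (real (a k j) * x k))
      + (\<Sum>k\<in>UNIV. \<Sum>l<length cs. q l * (fst (cs ! l) k * x k))"
    by (simp add: bid_price_def distrib_left sum.distrib sum_distrib_left mult_ac)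
  also have "(\<Sum>k\<in>UNIV. \<Sum>j\<in>UNIV. p j * (real (a k j) * x k)) =
      (\<Sum>j\<in>UNIV. \<Sum>k\<in>UNIV. p j * (real (a k j) * x k))"
    by (rule sum.swap)
  also have "(\<Sum>k\<in>UNIV. \<Sum>l<length cs. q l * (fst (cs ! l) k * x k)) =
      (\<Sum>l<length cs. \<Sum>k\<in>UNIV. q l * (fst (cs ! l) k * x k))"
    by (rule sum.swap)
  finally show ?thesis by (simp add: sum_distrib_left)
qed

lemma sum_by_bidder:
  fixes bidder :: "'k::finite \<Rightarrow> 'i::finite" and x :: "'k \<Rightarrow> real"
  shows "(\<Sum>k\<in>UNIV. x k * s (bidder k)) = (\<Sum>i\<in>UNIV. s i * (\<Sum>k\<in>{k. bidder k = i}. x k))"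
proof -
  have "(\<Sum>k\<in>UNIV. x k * s (bidder k)) = (\<Sum>i\<in>UNIV. \<Sum>k\<in>{k. bidder k = i}. x k * s (bidder k))"
    using sum.group[of UNIV UNIV bidder "\<lambda>k. x k * s (bidder k)"] by simp
  also have "\<dots> = (\<Sum>i\<in>UNIV. s i * (\<Sum>k\<in>{k. bidder k = i}. x k))"
    by (intro sum.cong refl) (simp add: sum_distrib_left mult.commute)
  finally show ?thesis .
qed

lemma dual_value_minus_welfare:
  "dual_value c cs p q s - (\<Sum>k\<in>UNIV. b k * x k) =
     (\<Sum>k\<in>UNIV. x k * (bid_price a cs p q k + s (bidder k) - b k))
     + (\<Sum>j\<in>UNIV. p j * (real (c j) - (\<Sum>k\<in>UNIV. real (a k j) * x k)))
     + (\<Sum>l<length cs. q l * (snd (cs ! l) - (\<Sum>k\<in>UNIV. fst (cs ! l) k * x k)))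
     + (\<Sum>i\<in>UNIV. s i * (1 - (\<Sum>k\<in>{k. bidder k = i}. x k)))"
proof -
  have "(\<Sum>k\<in>UNIV. x k * (bid_price a cs p q k + s (bidder k) - b k)) =
      (\<Sum>k\<in>UNIV. x k * bid_price a cs p q k) + (\<Sum>k\<in>UNIV. x k * s (bidder k)) - (\<Sum>k\<in>UNIV. b k * x k)"
    by (simp add: algebra_simps sum.distrib sum_subtractf)
  moreover have "(\<Sum>j\<in>UNIV. p j * (real (c j) - (\<Sum>k\<in>UNIV. real (a k j) * x k))) =
      (\<Sum>j\<in>UNIV. p j * real (c j)) - (\<Sum>j\<in>UNIV. p j * (\<Sum>k\<in>UNIV. real (a k j) * x k))"
    by (simp add: right_diff_distrib sum_subtractf)
  moreover have "(\<Sum>l<length cs. q l * (snd (cs ! l) - (\<Sum>k\<in>UNIV. fst (cs ! l) k * x k))) =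
      (\<Sum>l<length cs. q l * snd (cs ! l)) - (\<Sum>l<length cs. q l * (\<Sum>k\<in>UNIV. fst (cs ! l) k * x k))"
    by (simp add: right_diff_distrib sum_subtractf)
  moreover have "(\<Sum>i\<in>UNIV. s i * (1 - (\<Sum>k\<in>{k. bidder k = i}. x k))) =
      (\<Sum>i\<in>UNIV. s i) - (\<Sum>i\<in>UNIV. s i * (\<Sum>k\<in>{k. bidder k = i}. x k))"
    by (simp add: right_diff_distrib sum_subtractf)
  ultimately show ?thesis
    unfolding dual_value_def sum_weighted_bid_price sum_by_bidder by linarith
qed

lemma slackness_terms_nonneg:
  assumes x: "lp_feasible a c bidder cs x" and y: "dual_feasible a b bidder cs p q s"
  shows "0 \<le> x k * (bid_price a cs p q k + s (bidder k) - b k)"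
    and "0 \<le> p j * (real (c j) - (\<Sum>k\<in>UNIV. real (a k j) * x k))"
    and "l < length cs \<Longrightarrow> 0 \<le> q l * (snd (cs ! l) - (\<Sum>k\<in>UNIV. fst (cs ! l) k * x k))"
    and "0 \<le> s i * (1 - (\<Sum>k\<in>{k. bidder k = i}. x k))"
  using assms by (simp_all add: lp_feasible_def dual_feasible_def)

lemma weak_duality:
  assumes "lp_feasible a c bidder cs x" and "dual_feasible a b bidder cs p q s"
  shows "(\<Sum>k\<in>UNIV. b k * x k) \<le> dual_value c cs p q s"
proof -
  have "0 \<le> dual_value c cs p q s - (\<Sum>k\<in>UNIV. b k * x k)"
    unfolding dual_value_minus_welfare[where a = a and bidder = bidder]
    using slackness_terms_nonneg[OF assms] by (intro add_nonneg_nonneg sum_nonneg) auto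
  then show ?thesis by simp
qed

lemma complementary_slackness:
  assumes x: "lp_feasible a c bidder cs x" and y: "dual_feasible a b bidder cs p q s"
    and gap: "dual_value c cs p q s = (\<Sum>k\<in>UNIV. b k * x k)"
  shows "x k * (bid_price a cs p q k + s (bidder k) - b k) = 0"
    and "p j * (real (c j) - (\<Sum>k\<in>UNIV. real (a k j) * x k)) = 0"
    and "l < length cs \<Longrightarrow> q l * (snd (cs ! l) - (\<Sum>k\<in>UNIV. fst (cs ! l) k * x k)) = 0"
    and "s i * (1 - (\<Sum>k\<in>{k. bidder k = i}. x k)) = 0"
proof -
  note nonneg = slackness_terms_nonneg[OF x y]
  define T1 where "T1 = (\<Sum>k\<in>UNIV. x k * (bid_price a cs p q k + s (bidder k) - b k))"
  define T2 where "T2 = (\<Sum>j\<in>UNIV. p j * (real (c j) - (\<Sum>k\<in>UNIV. real (a k j) * x k)))"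
  define T3 where "T3 = (\<Sum>l<length cs. q l * (snd (cs ! l) - (\<Sum>k\<in>UNIV. fst (cs ! l) k * x k)))"
  define T4 where "T4 = (\<Sum>i\<in>UNIV. s i * (1 - (\<Sum>k\<in>{k. bidder k = i}. x k)))"
  have "T1 + T2 + T3 + T4 = 0"
    using dual_value_minus_welfare[of c cs p q s b x a bidder] gap by (simp add: T1_def T2_def T3_def T4_def)
  moreover have "0 \<le> T1" "0 \<le> T2" "0 \<le> T3" "0 \<le> T4"
    unfolding T1_def T2_def T3_def T4_def using nonneg by (auto intro: sum_nonneg)
  ultimately have "T1 = 0" "T2 = 0" "T3 = 0" "T4 = 0" by linarith+
  then show "x k * (bid_price a cs p q k + s (bidder k) - b k) = 0"
    and "p j * (real (c j) - (\<Sum>k\<in>UNIV. real (a k j) * x k)) = 0"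
    and "s i * (1 - (\<Sum>k\<in>{k. bidder k = i}. x k)) = 0"
    unfolding T1_def T2_def T4_def using nonneg(1,2,4) by (simp_all add: sum_nonneg_eq_0_iff)
  have "\<And>l. l \<in> {..<length cs} \<Longrightarrow> 0 \<le> q l * (snd (cs ! l) - (\<Sum>k\<in>UNIV. fst (cs ! l) k * x k))"
    using nonneg(3) by simp
  from sum_nonneg_eq_0_iff[OF finite_lessThan this] \<open>T3 = 0\<close>
  show "l < length cs \<Longrightarrow> q l * (snd (cs ! l) - (\<Sum>k\<in>UNIV. fst (cs ! l) k * x k)) = 0"
    unfolding T3_def by simp
qed

lemma walrasian_eq_if_qp_feasible:
  assumes alloc: "feasible_alloc a c bidder xs" and lp: "lp_feasible a c bidder cs xs"
    and qp: "qp_feasible a c b bidder xs cs p q s"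
  shows "walrasian_eq a c b bidder xs cs p q"
proof -
  have y: "dual_feasible a b bidder cs p q s"
    and gap: "dual_value c cs p q s = (\<Sum>k\<in>UNIV. b k * xs k)"
    using qp by (simp_all add: qp_feasible_iff)
  note cs = complementary_slackness[OF lp y gap]
  have "surplus a b bidder xs cs p q i = s i" for i
  proof -
    have "surplus a b bidder xs cs p q i = (\<Sum>k\<in>{k. bidder k = i}. xs k * s i)"
      unfolding surplus_def using cs(1) by (intro sum.cong) (auto simp: algebra_simps)
    also have "\<dots> = s i * (\<Sum>k\<in>{k. bidder k = i}. xs k)" by (simp add: sum_distrib_left mult.commute)
    also have "\<dots> = s i" using cs(4)[of i] by (simp add: algebra_simps)
    finally show ?thesis .
  qed
  then show ?thesis
    unfolding walrasian_eq_def
  proof (intro conjI allI impI)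
    show "p j = 0" if "(\<Sum>k\<in>UNIV. real (a k j) * xs k) < real (c j)" for j
      using cs(2)[of j] that by simp
    show "q l = 0" if "l < length cs" "(\<Sum>k\<in>UNIV. fst (cs ! l) k * xs k) < snd (cs ! l)" for l
      using cs(3)[of l] that by simp
  qed (use alloc lp y in \<open>auto simp: lp_feasible_def dual_feasible_def\<close>)
qed

lemma lp_bound_homogenized:
  fixes a :: "'k::finite \<Rightarrow> 'j::finite \<Rightarrow> nat" and bidder :: "'k \<Rightarrow> 'i::finite"
  assumes bound: "\<And>y. lp_feasible a c bidder cs y \<Longrightarrow> (\<Sum>k\<in>UNIV. b k * y k) \<le> w"
    and x: "\<forall>k. 0 \<le> x k" and "0 \<le> t"
    and items: "\<forall>j. (\<Sum>k\<in>UNIV. real (a k j) * x k) \<le> t * real (c j)"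
    and bidders: "\<forall>i. (\<Sum>k\<in>{k. bidder k = i}. x k) \<le> t"
    and cuts: "\<forall>l<length cs. (\<Sum>k\<in>UNIV. fst (cs ! l) k * x k) \<le> t * snd (cs ! l)"
  shows "(\<Sum>k\<in>UNIV. b k * x k) \<le> t * w"
proof -
  have x_le: "x k \<le> t" for k
  proof -
    have "x k \<le> (\<Sum>k'\<in>{k'. bidder k' = bidder k}. x k')"
      by (rule member_le_sum) (use x in auto)
    also have "\<dots> \<le> t" using bidders by blast
    finally show ?thesis .
  qed
  show ?thesis
  proof (cases "t = 0")
    case True
    then have "x k = 0" for k using x_le[of k] x by (simp add: order_antisym)
    then show ?thesis using True by simp
  next
    case False
    then have "0 < t" using \<open>0 \<le> t\<close> by simp
    have scale: "(\<Sum>k\<in>A. f k * (x k / t)) = (\<Sum>k\<in>A. f k * x k) / t" for f A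
      by (simp add: sum_divide_distrib)
    have "lp_feasible a c bidder cs (\<lambda>k. x k / t)"
      unfolding lp_feasible_def
    proof (intro conjI allI impI)
      show "0 \<le> x k / t" "x k / t \<le> 1" for k
        using x x_le[of k] \<open>0 < t\<close> by auto
      show "(\<Sum>k\<in>UNIV. real (a k j) * (x k / t)) \<le> real (c j)" for j
        using items[rule_format, of j] \<open>0 < t\<close> by (simp only: scale) (simp add: divide_le_eq algebra_simps)
      show "(\<Sum>k\<in>{k. bidder k = i}. x k / t) \<le> 1" for i
        using bidders \<open>0 < t\<close> by (simp add: sum_divide_distrib[symmetric] divide_le_eq)
      show "(\<Sum>k\<in>UNIV. fst (cs ! l) k * (x k / t)) \<le> snd (cs ! l)" if "l < length cs" for l
        using cuts that \<open>0 < t\<close> by (simp only: scale) (simp add: divide_le_eq algebra_simps)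
    qed
    from bound[OF this] show ?thesis
      using \<open>0 < t\<close> by (simp only: scale) (simp add: divide_le_eq algebra_simps)
  qed
qed

datatype ('j, 'i, 'k) dual_var = Item 'j | Bidder 'i | Cut nat | Bid 'k | Welfare

definition dual_vars :: "nat \<Rightarrow> ('j, 'i, 'k) dual_var set" where
  "dual_vars L = range Item \<union> range Bidder \<union> Cut ` {..<L} \<union> range Bid \<union> {Welfare}"

lemma finite_dual_vars: "finite (dual_vars L :: ('j::finite, 'i::finite, 'k::finite) dual_var set)"
  by (simp add: dual_vars_def)

lemma sum_dual_vars:
  fixes f :: "('j::finite, 'i::finite, 'k::finite) dual_var \<Rightarrow> 'a::comm_monoid_add"
  shows "(\<Sum>r\<in>dual_vars L. f r) = (\<Sum>j\<in>UNIV. f (Item j)) + (\<Sum>i\<in>UNIV. f (Bidder i))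
           + (\<Sum>l<L. f (Cut l)) + (\<Sum>k\<in>UNIV. f (Bid k)) + f Welfare"
proof -
  have split: "dual_vars L = insert Welfare (range Item \<union> range Bidder \<union> Cut ` {..<L} \<union> range Bid)"
    by (auto simp: dual_vars_def)
  have "(\<Sum>r\<in>dual_vars L. f r) =
      f Welfare + sum f (range Item \<union> range Bidder \<union> Cut ` {..<L} \<union> range Bid)"
    unfolding split by (rule sum.insert) auto
  also have "sum f (range Item \<union> range Bidder \<union> Cut ` {..<L} \<union> range Bid) =
      sum f (range Item \<union> range Bidder \<union> Cut ` {..<L}) + sum f (range Bid)"
    by (rule sum.union_disjoint) auto
  also have "sum f (range Item \<union> range Bidder \<union> Cut ` {..<L}) =
      sum f (range Item \<union> range Bidder) + sum f (Cut ` {..<L})"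
    by (rule sum.union_disjoint) auto
  also have "sum f (range Item \<union> range Bidder) = sum f (range Item) + sum f (range Bidder)"
    by (rule sum.union_disjoint) auto
  finally show ?thesis by (simp add: sum.reindex inj_on_def add_ac)
qed

lemma dotp_zero_right [simp]: "dotp g (\<lambda>_. 0) = 0"
  by (simp add: dotp_def)

lemma dotp_case_option:
  fixes v :: "'k::finite option \<Rightarrow> real"
  shows "dotp v (case_option t h) = v None * t + dotp (\<lambda>k. v (Some k)) h"
  by (simp add: dotp_def UNIV_option_conv sum.reindex)

text \<open>Columns of the dual of the LP with cuts, plus slack columns for the bid rows and the
  welfare row; coordinate \<open>None\<close> is the welfare row and \<open>Some k\<close> the row of bid \<open>k\<close>.\<close>

definition dual_column ::
  "('k::finite \<Rightarrow> 'j::finite \<Rightarrow> nat) \<Rightarrow> ('j \<Rightarrow> nat) \<Rightarrow> ('k \<Rightarrow> 'i) \<Rightarrow> 'k cut list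
     \<Rightarrow> ('j, 'i, 'k) dual_var \<Rightarrow> 'k option \<Rightarrow> real" where
  "dual_column a c bidder cs r = (case r of
       Item j \<Rightarrow> case_option (real (c j)) (\<lambda>k. real (a k j))
     | Bidder i \<Rightarrow> case_option 1 (indicator {k. bidder k = i})
     | Cut l \<Rightarrow> case_option (snd (cs ! l)) (fst (cs ! l))
     | Bid k \<Rightarrow> case_option 0 (\<lambda>k'. - indicator {k} k')
     | Welfare \<Rightarrow> case_option 1 (\<lambda>_. 0))"

lemma dual_columns_farkas_condition:
  fixes a :: "'k::finite \<Rightarrow> 'j::finite \<Rightarrow> nat" and bidder :: "'k \<Rightarrow> 'i::finite"
    and v :: "'k option \<Rightarrow> real"
  assumes bound: "\<And>y. lp_feasible a c bidder cs y \<Longrightarrow> (\<Sum>k\<in>UNIV. b k * y k) \<le> w"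
    and col: "\<And>r. r \<in> dual_vars (length cs) \<Longrightarrow> 0 \<le> dotp v (dual_column a c bidder cs r)"
  shows "0 \<le> dotp v (case_option w b)"
proof -
  define x where "x k = - v (Some k)" for k
  have "(\<Sum>k\<in>UNIV. b k * x k) \<le> v None * w"
  proof (rule lp_bound_homogenized[OF bound])
    show "\<forall>k. 0 \<le> x k"
      using col[of "Bid _"] by (simp add: dual_vars_def dual_column_def dotp_case_option
          dotp_uminus_right dotp_indicator_singleton x_def)
    show "0 \<le> v None"
      using col[of Welfare] by (simp add: dual_vars_def dual_column_def dotp_case_option)
    show "\<forall>j. (\<Sum>k\<in>UNIV. real (a k j) * x k) \<le> v None * real (c j)"
    proof
      fix j
      show "(\<Sum>k\<in>UNIV. real (a k j) * x k) \<le> v None * real (c j)"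
        using col[of "Item j"]
        by (simp add: dual_vars_def dual_column_def dotp_case_option dotp_def[of "\<lambda>k. v (Some k)"] x_def
            sum_negf mult.commute)
    qed
    show "\<forall>i. (\<Sum>k\<in>{k. bidder k = i}. x k) \<le> v None"
    proof
      fix i
      show "(\<Sum>k\<in>{k. bidder k = i}. x k) \<le> v None"
        using col[of "Bidder i"]
        by (simp add: dual_vars_def dual_column_def dotp_case_option dotp_commute[of _ "indicator _"]
            dotp_indicator x_def sum_negf)
    qed
    show "\<forall>l<length cs. (\<Sum>k\<in>UNIV. fst (cs ! l) k * x k) \<le> v None * snd (cs ! l)"
    proof (intro allI impI)
      fix l assume "l < length cs"
      then show "(\<Sum>k\<in>UNIV. fst (cs ! l) k * x k) \<le> v None * snd (cs ! l)"
        using col[of "Cut l"]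
        by (simp add: dual_vars_def dual_column_def dotp_case_option dotp_def[of "\<lambda>k. v (Some k)"] x_def
            sum_negf mult.commute)
    qed
  qed
  then show ?thesis
    by (simp add: dotp_case_option dotp_def[of "\<lambda>k. v (Some k)"] x_def sum_negf mult.commute)
qed

lemma dual_solution_of_combination:
  fixes a :: "'k::finite \<Rightarrow> 'j::finite \<Rightarrow> nat" and bidder :: "'k \<Rightarrow> 'i::finite"
    and y :: "('j, 'i, 'k) dual_var \<Rightarrow> real"
  assumes nonneg: "\<forall>r\<in>dual_vars (length cs). 0 \<le> y r"
    and comb: "\<And>n. case_option w b n = (\<Sum>r\<in>dual_vars (length cs). y r * dual_column a c bidder cs r n)"
  shows "dual_feasible a b bidder cs (\<lambda>j. y (Item j)) (\<lambda>l. y (Cut l)) (\<lambda>i. y (Bidder i))"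
    and "dual_value c cs (\<lambda>j. y (Item j)) (\<lambda>l. y (Cut l)) (\<lambda>i. y (Bidder i)) \<le> w"
proof -
  have "b k = bid_price a cs (\<lambda>j. y (Item j)) (\<lambda>l. y (Cut l)) k + y (Bidder (bidder k)) - y (Bid k)" for k
    using comb[of "Some k"]
    by (simp add: sum_dual_vars dual_column_def bid_price_def indicator_def sum_negf mult.commute)
  moreover have "w = dual_value c cs (\<lambda>j. y (Item j)) (\<lambda>l. y (Cut l)) (\<lambda>i. y (Bidder i)) + y Welfare"
    using comb[of None] by (simp add: sum_dual_vars dual_column_def dual_value_def)
  ultimately show "dual_feasible a b bidder cs (\<lambda>j. y (Item j)) (\<lambda>l. y (Cut l)) (\<lambda>i. y (Bidder i))"
    and "dual_value c cs (\<lambda>j. y (Item j)) (\<lambda>l. y (Cut l)) (\<lambda>i. y (Bidder i)) \<le> w"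
    using nonneg by (force simp: dual_feasible_def dual_vars_def)+
qed

lemma lp_strong_duality:
  fixes a :: "'k::finite \<Rightarrow> 'j::finite \<Rightarrow> nat" and bidder :: "'k \<Rightarrow> 'i::finite"
  assumes opt: "lp_optimal a c b bidder cs xs"
  shows "\<exists>p q s. qp_feasible a c b bidder xs cs p q s"
proof -
  define w where "w = (\<Sum>k\<in>UNIV. b k * xs k)"
  have bound: "(\<Sum>k\<in>UNIV. b k * y k) \<le> w" if "lp_feasible a c bidder cs y" for y
    using opt that by (simp add: lp_optimal_def w_def)
  obtain y :: "('j, 'i, 'k) dual_var \<Rightarrow> real" where "\<forall>r\<in>dual_vars (length cs). 0 \<le> y r"
    and "\<forall>n. case_option w b n = (\<Sum>r\<in>dual_vars (length cs). y r * dual_column a c bidder cs r n)"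
    using farkas_dotp[OF finite_dual_vars, where M = "dual_column a c bidder cs" and z = "case_option w b"]
      dual_columns_farkas_condition[OF bound] by blast
  then have "dual_feasible a b bidder cs (\<lambda>j. y (Item j)) (\<lambda>l. y (Cut l)) (\<lambda>i. y (Bidder i))"
    and "dual_value c cs (\<lambda>j. y (Item j)) (\<lambda>l. y (Cut l)) (\<lambda>i. y (Bidder i)) \<le> w"
    using dual_solution_of_combination by blast+
  moreover have "lp_feasible a c bidder cs xs" using opt by (simp add: lp_optimal_def)
  ultimately show ?thesis
    using weak_duality by (fastforce simp: qp_feasible_iff w_def)
qed

section \<open>The final quadratic program\<close>

lemma qp_feasible_bounded:
  assumes c: "\<forall>j. 1 \<le> c j" and cuts: "\<forall>ct\<in>set cs. 1 \<le> snd ct"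
    and qp: "qp_feasible a c b bidder xs cs p q s"
  defines "w \<equiv> \<Sum>k\<in>UNIV. b k * xs k"
  shows "p j \<in> {0..w}" and "l < length cs \<Longrightarrow> q l \<in> {0..w}" and "s i \<in> {0..w}"
proof -
  have p: "\<forall>j. 0 \<le> p j" and q: "\<forall>l<length cs. 0 \<le> q l" and s: "\<forall>i. 0 \<le> s i"
    and val: "dual_value c cs p q s = w"
    using qp by (auto simp: qp_feasible_iff dual_feasible_def w_def)
  have snd_cs: "1 \<le> snd (cs ! l)" if "l < length cs" for l
    using cuts that by simp
  then have snd_nonneg: "0 \<le> snd (cs ! l)" if "l < length cs" for l
    using that by (meson order_trans zero_le_one)
  have P: "p j \<le> (\<Sum>j\<in>UNIV. p j * real (c j))" for j
  proof -
    have "p j * 1 \<le> p j * real (c j)" using p c by (intro mult_left_mono) auto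
    then have "p j \<le> p j * real (c j)" by simp
    also have "\<dots> \<le> (\<Sum>j\<in>UNIV. p j * real (c j))" by (rule member_le_sum) (use p in auto)
    finally show ?thesis .
  qed
  have Q: "q l \<le> (\<Sum>l<length cs. q l * snd (cs ! l))" if "l < length cs" for l
  proof -
    have "q l * 1 \<le> q l * snd (cs ! l)" using q snd_cs that by (intro mult_left_mono) auto
    then have "q l \<le> q l * snd (cs ! l)" by simp
    also have "\<dots> \<le> (\<Sum>l<length cs. q l * snd (cs ! l))"
      by (rule member_le_sum) (use q snd_nonneg that in auto)
    finally show ?thesis .
  qed
  have S: "s i \<le> (\<Sum>i\<in>UNIV. s i)" for i by (rule member_le_sum) (use s in auto)
  have "0 \<le> (\<Sum>j\<in>UNIV. p j * real (c j))" "0 \<le> (\<Sum>l<length cs. q l * snd (cs ! l))" "0 \<le> (\<Sum>i\<in>UNIV. s i)"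
    using p q s snd_nonneg by (auto intro!: sum_nonneg)
  then show "p j \<in> {0..w}" and "l < length cs \<Longrightarrow> q l \<in> {0..w}" and "s i \<in> {0..w}"
    using P[of j] Q[of l] S[of i] p q s val by (auto simp: dual_value_def)
qed

lemma continuous_on_coordinate [continuous_intros]:
  fixes f :: "'a::topological_space \<Rightarrow> 'b \<Rightarrow> 'c::topological_space"
  shows "continuous_on S f \<Longrightarrow> continuous_on S (\<lambda>x. f x i)"
  by (rule continuous_on_product_then_coordinatewise)

lemma compact_PiE_UNIV:
  fixes S :: "'a \<Rightarrow> real set"
  assumes "\<And>i. compact (S i)"
  shows "compact (Pi\<^sub>E UNIV S)"
proof -
  have "compactin (product_topology (\<lambda>i. euclidean) UNIV) (Pi\<^sub>E UNIV S)"
    unfolding compactin_PiE using assms by simp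
  then show ?thesis unfolding euclidean_product_topology by simp
qed

lemma qp_feasible_truncate:
  assumes "qp_feasible a c b bidder xs cs p q s"
  shows "qp_feasible a c b bidder xs cs p (\<lambda>l. if l < length cs then q l else 0) s"
proof -
  have "bid_price a cs p (\<lambda>l. if l < length cs then q l else 0) = bid_price a cs p q"
    unfolding bid_price_def by (intro ext arg_cong2[where f="(+)"] refl sum.cong) auto
  then show ?thesis using assms unfolding qp_feasible_def by (auto intro!: sum.cong)
qed

lemma qp_objective_truncate:
  "qp_objective c cs p (\<lambda>l. if l < length cs then q l else 0) = qp_objective c cs p q"
  unfolding qp_objective_def by (intro arg_cong2[where f="(+)"] refl sum.cong) auto

lemma compact_qp_feasible_truncated:
  fixes a :: "'k::finite \<Rightarrow> 'j::finite \<Rightarrow> nat" and bidder :: "'k \<Rightarrow> 'i::finite"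
  assumes c: "\<forall>j. 1 \<le> c j" and cuts: "\<forall>ct\<in>set cs. 1 \<le> snd ct"
  shows "compact {x. qp_feasible a c b bidder xs cs (fst x) (fst (snd x)) (snd (snd x))
                     \<and> (\<forall>l. length cs \<le> l \<longrightarrow> fst (snd x) l = 0)}"
    (is "compact ?F")
proof -
  define L where "L = length cs"
  define w where "w = (\<Sum>k\<in>UNIV. b k * xs k)"
  define box :: "(('j \<Rightarrow> real) \<times> (nat \<Rightarrow> real) \<times> ('i \<Rightarrow> real)) set"
    where "box = Pi\<^sub>E UNIV (\<lambda>_. {0..w}) \<times> Pi\<^sub>E UNIV (\<lambda>l. if l < L then {0..w} else {0})
                 \<times> Pi\<^sub>E UNIV (\<lambda>_. {0..w})"
  have sub: "?F \<subseteq> box"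
  proof
    fix x assume "x \<in> ?F"
    then obtain p q s where x: "x = (p, q, s)" and "qp_feasible a c b bidder xs cs p q s"
      and tail: "\<forall>l. L \<le> l \<longrightarrow> q l = 0"
      by (cases x) (auto simp: L_def)
    note bounds = qp_feasible_bounded[OF c cuts this(2), folded w_def]
    show "x \<in> box"
      unfolding x box_def PiE_UNIV_domain using bounds tail by (auto simp: L_def not_less)
  qed
  have "compact box"
    unfolding box_def by (intro compact_Times compact_PiE_UNIV) auto
  moreover have "closed ?F"
  proof -
    have "?F = {x. (\<forall>j. 0 \<le> fst x j) \<and> (\<forall>l. l < L \<longrightarrow> 0 \<le> fst (snd x) l) \<and> (\<forall>i. 0 \<le> snd (snd x) i) \<and>
       (\<forall>k. b k \<le> (\<Sum>j\<in>UNIV. fst x j * real (a k j)) + (\<Sum>l<L. fst (snd x) l * fst (cs ! l) k)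
                   + snd (snd x) (bidder k)) \<and>
       (\<Sum>j\<in>UNIV. fst x j * real (c j)) + (\<Sum>l<L. fst (snd x) l * snd (cs ! l)) + (\<Sum>i\<in>UNIV. snd (snd x) i) = w
       \<and> (\<forall>l. L \<le> l \<longrightarrow> fst (snd x) l = 0)}"
      unfolding qp_feasible_def bid_price_def L_def w_def by auto
    also have "closed \<dots>"
      by (intro closed_Collect_conj closed_Collect_all closed_Collect_imp open_Collect_const
          closed_Collect_le closed_Collect_eq continuous_intros)
    finally show ?thesis .
  qed
  ultimately have "compact (box \<inter> ?F)" by (rule compact_Int_closed)
  then show ?thesis by (simp only: Int_absorb1[OF sub])
qed

lemma qp_optimal_exists:
  fixes a :: "'k::finite \<Rightarrow> 'j::finite \<Rightarrow> nat" and bidder :: "'k \<Rightarrow> 'i::finite"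
  assumes c: "\<forall>j. 1 \<le> c j" and cuts: "\<forall>ct\<in>set cs. 1 \<le> snd ct"
    and qp: "qp_feasible a c b bidder xs cs p0 q0 s0"
  shows "\<exists>p q s. qp_optimal a c b bidder xs cs p q s"
proof -
  \<comment> \<open>prices of cuts beyond the list are irrelevant; fixing them to 0 makes the feasible set compact\<close>
  define trunc :: "(nat \<Rightarrow> real) \<Rightarrow> nat \<Rightarrow> real"
    where "trunc q = (\<lambda>l. if l < length cs then q l else 0)" for q
  define F :: "(('j \<Rightarrow> real) \<times> (nat \<Rightarrow> real) \<times> ('i \<Rightarrow> real)) set"
    where "F = {x. qp_feasible a c b bidder xs cs (fst x) (fst (snd x)) (snd (snd x))
                   \<and> (\<forall>l. length cs \<le> l \<longrightarrow> fst (snd x) l = 0)}"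
  define \<Phi> :: "('j \<Rightarrow> real) \<times> (nat \<Rightarrow> real) \<times> ('i \<Rightarrow> real) \<Rightarrow> real"
    where "\<Phi> x = qp_objective c cs (fst x) (fst (snd x))" for x
  have F_trunc: "(p, trunc q, s) \<in> F" if "qp_feasible a c b bidder xs cs p q s" for p q s
    using qp_feasible_truncate[OF that] by (simp add: F_def trunc_def)
  have "compact F" unfolding F_def by (rule compact_qp_feasible_truncated[OF c cuts])
  moreover have "F \<noteq> {}" using F_trunc[OF qp] by blast
  moreover have "continuous_on F \<Phi>"
    unfolding \<Phi>_def qp_objective_def by (intro continuous_intros)
  ultimately obtain xm where "xm \<in> F" and xm_min: "\<forall>y\<in>F. \<Phi> xm \<le> \<Phi> y"
    by (meson continuous_attains_inf)
  obtain p q s where xm: "xm = (p, q, s)" by (cases xm)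
  have "qp_optimal a c b bidder xs cs p q s"
    unfolding qp_optimal_def
  proof (intro conjI allI impI)
    show "qp_feasible a c b bidder xs cs p q s" using \<open>xm \<in> F\<close> by (simp add: F_def xm)
    fix p' q' s' assume "qp_feasible a c b bidder xs cs p' q' s'"
    then have "\<Phi> xm \<le> \<Phi> (p', trunc q', s')" using xm_min F_trunc by blast
    then show "qp_objective c cs p q \<le> qp_objective c cs p' q'"
      by (simp add: \<Phi>_def xm trunc_def qp_objective_truncate)
  qed
  then show ?thesis by blast
qed

section \<open>Algorithm 1\<close>

locale auction =
  fixes a :: "'k::finite \<Rightarrow> 'j::finite \<Rightarrow> nat" and c :: "'j \<Rightarrow> nat"
    and b :: "'k \<Rightarrow> real" and bidder :: "'k \<Rightarrow> 'i::finite" and xs :: "'k \<Rightarrow> real"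
  assumes supply_pos: "\<forall>j. 1 \<le> c j"
    and bundle_le_supply: "\<forall>k j. a k j \<le> c j"
    and bids_nonneg: "\<forall>k. 0 \<le> b k"
    and xs_optimal: "wdp_optimal a c b bidder xs"
begin

abbreviation welfare :: real where
  "welfare \<equiv> \<Sum>k\<in>UNIV. b k * xs k"

abbreviation reachable :: "'k cut list \<Rightarrow> bool" where
  "reachable \<equiv> (alg_step a c b bidder xs)\<^sup>*\<^sup>* []"

lemma xs_feasible: "feasible_alloc a c bidder xs"
  using xs_optimal by (simp add: wdp_optimal_def)

lemma welfare_ge: "feasible_alloc a c bidder x \<Longrightarrow> (\<Sum>k\<in>UNIV. b k * x k) \<le> welfare"
  using xs_optimal by (simp add: wdp_optimal_def)

lemma welfare_ge_bid: "b k \<le> welfare"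
  using welfare_ge[OF feasible_alloc_indicator[OF bundle_le_supply, of bidder k]]
  by (simp add: dotp_indicator_singleton[unfolded dotp_def])

lemma welfare_nonneg: "0 \<le> welfare"
  using welfare_ge_bid bids_nonneg by (meson order_trans)

lemma alg_step_appends_cut:
  assumes "alg_step a c b bidder xs cs cs'"
  shows "\<exists>ct. cs' = cs @ [ct] \<and> valid_cut a c bidder xs ct \<and> 1 \<le> snd ct"
proof -
  obtain xf al g where al: "sep_solution a c bidder xs xf al" and g: "least_scale al g"
    and cs': "cs' = cs @ [(\<lambda>k. g * al k, g)]"
    using assms by (auto simp: alg_step_def)
  have "1 \<le> g" using g by (simp add: least_scale_def)
  then show ?thesis
    using cs' valid_cut_of_sep_feasible[OF sep_solution_feasible[OF al]] by auto
qed

lemma reachable_cuts: "reachable cs \<Longrightarrow> \<forall>ct\<in>set cs. valid_cut a c bidder xs ct \<and> 1 \<le> snd ct"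
proof (induction rule: rtranclp_induct)
  case (step cs cs')
  then obtain ct where "cs' = cs @ [ct]" "valid_cut a c bidder xs ct \<and> 1 \<le> snd ct"
    using alg_step_appends_cut by blast
  then show ?case using step.IH by auto
qed simp

lemma lp_feasible_xs:
  assumes "\<forall>ct\<in>set cs. valid_cut a c bidder xs ct"
  shows "lp_feasible a c bidder cs xs"
  unfolding lp_feasible_def
proof (intro conjI allI impI)
  show "(\<Sum>k\<in>UNIV. fst (cs ! l) k * xs k) \<le> snd (cs ! l)" if "l < length cs" for l
    using assms that nth_mem by (fastforce simp: valid_cut_def)
qed (use xs_feasible feasible_alloc_01[OF xs_feasible] in \<open>auto simp: feasible_alloc_def\<close>)

lemma lp_optimal_exists:
  assumes "\<forall>ct\<in>set cs. valid_cut a c bidder xs ct"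
  shows "\<exists>xf. lp_optimal a c b bidder cs xf"
proof -
  have "\<forall>y\<in>polyhedron_of (lp_constraints a c bidder cs). \<forall>k. \<bar>y k\<bar> \<le> 1"
    by (simp add: lp_feasible_iff_polyhedron[symmetric] lp_feasible_def)
  moreover have "xs \<in> polyhedron_of (lp_constraints a c bidder cs)"
    using lp_feasible_xs[OF assms] by (simp add: lp_feasible_iff_polyhedron)
  ultimately obtain v where "is_vertex (polyhedron_of (lp_constraints a c bidder cs)) v"
    and "\<forall>x\<in>polyhedron_of (lp_constraints a c bidder cs). dotp b x \<le> dotp b v"
    using exists_optimal_vertex[OF finite_lp_constraints] by blast
  moreover from this(1) have "v \<in> polyhedron_of (lp_constraints a c bidder cs)"
    by (simp add: is_vertex_def)
  ultimately show ?thesis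
    by (auto simp: lp_optimal_def lp_feasible_iff_polyhedron dotp_def)
qed

lemma welfare_pos:
  assumes "welfare < lp_value a c b bidder cs" and xf: "lp_optimal a c b bidder cs xf"
  shows "0 < welfare"
proof -
  have "0 < (\<Sum>k\<in>UNIV. b k * xf k)"
    using assms welfare_nonneg lp_value_eq[OF xf] by simp
  then obtain k where "b k \<noteq> 0" by (metis (no_types, lifting) mult_eq_0_iff sum.neutral less_irrefl)
  then have "0 < b k" using bids_nonneg by (simp add: order_le_neq_trans)
  then show ?thesis using welfare_ge_bid[of k] by linarith
qed

lemma sep_feasible_scaled_bids:
  assumes "0 < welfare"
  shows "sep_feasible a c bidder xs (\<lambda>k. b k / welfare)"
proof -
  have "(\<Sum>k\<in>UNIV. b k * xl k) \<le> welfare" if "maximal_alloc a c bidder xl" for xl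
    using that welfare_ge by (simp add: maximal_alloc_def)
  then show ?thesis
    using assms bids_nonneg
    by (auto simp: sep_feasible_def sum_divide_distrib[symmetric] right_diff_distrib sum_subtractf)
qed

lemma sep_solution_exists:
  assumes "0 < welfare"
  shows "\<exists>al. sep_solution a c bidder xs xf al"
proof -
  have "\<forall>y\<in>polyhedron_of (sep_constraints a c bidder xs). \<forall>k. \<bar>y k\<bar> \<le> 1"
    using sep_feasible_bounded bundle_le_supply by (fastforce simp: sep_feasible_iff_polyhedron[symmetric])
  moreover have "(\<lambda>k. b k / welfare) \<in> polyhedron_of (sep_constraints a c bidder xs)"
    using sep_feasible_scaled_bids[OF assms] by (simp add: sep_feasible_iff_polyhedron)
  ultimately obtain al where "is_vertex (polyhedron_of (sep_constraints a c bidder xs)) al"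
    and "\<forall>be\<in>polyhedron_of (sep_constraints a c bidder xs). dotp xf be \<le> dotp xf al"
    using exists_optimal_vertex[OF finite_sep_constraints] by blast
  then have "sep_solution a c bidder xs xf al"
    by (auto simp: sep_solution_def sep_feasible_set sep_feasible_iff_polyhedron dotp_def mult.commute)
  then show ?thesis by blast
qed

lemma alg_step_exists:
  assumes "reachable cs" and lt: "welfare < lp_value a c b bidder cs"
  shows "\<exists>cs'. alg_step a c b bidder xs cs cs'"
proof -
  obtain xf where xf: "lp_optimal a c b bidder cs xf"
    using lp_optimal_exists reachable_cuts[OF assms(1)] by blast
  obtain al where al: "sep_solution a c bidder xs xf al"
    using sep_solution_exists[OF welfare_pos[OF lt xf]] by blast
  then have "is_vertex (polyhedron_of (sep_constraints a c bidder xs)) al"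
    by (simp add: sep_solution_def sep_feasible_set)
  then have rat: "\<forall>k. al k \<in> \<rat>"
    using vertex_rational[OF finite_sep_constraints _ sep_constraints_rational[OF xs_feasible]] by blast
  have "(\<Sum>k\<in>UNIV. al k * xs k) = 1"
    using sep_solution_feasible[OF al] by (simp add: sep_feasible_def)
  then obtain k0 where "al k0 \<noteq> 0" by (metis (mono_tags) mult_zero_left sum.neutral zero_neq_one)
  then obtain g where "least_scale al g" using least_scale_exists[OF rat] by blast
  then show ?thesis using lt xf al by (auto simp: alg_step_def)
qed

lemma lp_optimal_xs_if_no_gap:
  assumes "reachable cs" and "\<not> welfare < lp_value a c b bidder cs"
  shows "lp_optimal a c b bidder cs xs"
proof -
  have valid: "\<forall>ct\<in>set cs. valid_cut a c bidder xs ct" using reachable_cuts[OF assms(1)] by blast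
  obtain xf where xf: "lp_optimal a c b bidder cs xf" using lp_optimal_exists[OF valid] by blast
  then have "(\<Sum>k\<in>UNIV. b k * y k) \<le> welfare" if "lp_feasible a c bidder cs y" for y
    using that assms(2) lp_value_eq[OF xf] by (auto simp: lp_optimal_def)
  then show ?thesis using lp_feasible_xs[OF valid] by (simp add: lp_optimal_def)
qed

definition candidate_cuts :: "'k cut set" where
  "candidate_cuts = {(\<lambda>k. g * al k, g) | al g.
     is_vertex (polyhedron_of (sep_constraints a c bidder xs)) al \<and> least_scale al g}"

lemma finite_candidate_cuts: "finite candidate_cuts"
proof -
  define V where "V = {al. is_vertex (polyhedron_of (sep_constraints a c bidder xs)) al}"
  have scales: "finite {g. least_scale al g}" for al :: "'k \<Rightarrow> real"
  proof (cases "\<exists>g. least_scale al g")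
    case True
    then obtain g0 where "least_scale al g0" by blast
    then have "{g. least_scale al g} \<subseteq> {g0}" using least_scale_unique by blast
    then show ?thesis by (rule finite_subset) simp
  qed simp
  have "finite (SIGMA al:V. {g. least_scale al g})"
    by (rule finite_SigmaI) (use finite_vertices[OF finite_sep_constraints] scales in \<open>simp_all add: V_def\<close>)
  moreover have "candidate_cuts \<subseteq> (\<lambda>(al, g). (\<lambda>k. g * al k, g)) ` (SIGMA al:V. {g. least_scale al g})"
    by (auto simp: candidate_cuts_def V_def)
  ultimately show ?thesis by (meson finite_imageI finite_subset)
qed

lemma alg_step_adds_new_cut:
  assumes "alg_step a c b bidder xs cs cs'"
  shows "\<exists>ct\<in>candidate_cuts. ct \<notin> set cs \<and> cs' = cs @ [ct]"
proof -
  obtain xf al g where lt: "welfare < lp_value a c b bidder cs" and xf: "lp_optimal a c b bidder cs xf"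
    and al: "sep_solution a c bidder xs xf al" and g: "least_scale al g"
    and cs': "cs' = cs @ [(\<lambda>k. g * al k, g)]"
    using assms by (auto simp: alg_step_def)
  have "0 < welfare" by (rule welfare_pos[OF lt xf])
  \<comment> \<open>the new cut is violated by the current LP optimum \<open>xf\<close>, which satisfies all earlier cuts\<close>
  have "1 < lp_value a c b bidder cs / welfare"
    using lt \<open>0 < welfare\<close> by simp
  also have "\<dots> = (\<Sum>k\<in>UNIV. b k / welfare * xf k)"
    using lp_value_eq[OF xf] by (simp add: sum_divide_distrib)
  also have "\<dots> \<le> (\<Sum>k\<in>UNIV. al k * xf k)"
    using al sep_feasible_scaled_bids[OF \<open>0 < welfare\<close>] unfolding sep_solution_def by blast
  finally have violated: "1 < (\<Sum>k\<in>UNIV. al k * xf k)" .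
  have "(\<lambda>k. g * al k, g) \<notin> set cs"
  proof
    assume "(\<lambda>k. g * al k, g) \<in> set cs"
    then obtain l where "l < length cs" "cs ! l = (\<lambda>k. g * al k, g)"
      by (auto simp: in_set_conv_nth)
    then have "g * (\<Sum>k\<in>UNIV. al k * xf k) \<le> g * 1"
      using xf by (auto simp: lp_optimal_def lp_feasible_def sum_distrib_left mult.assoc)
    moreover have "0 < g" using g by (simp add: least_scale_def)
    ultimately show False using violated by simp
  qed
  moreover have "(\<lambda>k. g * al k, g) \<in> candidate_cuts"
    using al g by (auto simp: candidate_cuts_def sep_solution_def sep_feasible_set)
  ultimately show ?thesis using cs' by blast
qed

lemma alg_terminates: "\<not> (\<exists>f. f 0 = [] \<and> (\<forall>n. alg_step a c b bidder xs (f n) (f (Suc n))))"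
proof
  assume "\<exists>f. f 0 = [] \<and> (\<forall>n. alg_step a c b bidder xs (f n) (f (Suc n)))"
  then obtain f where f0: "f 0 = []" and steps: "\<And>n. alg_step a c b bidder xs (f n) (f (Suc n))"
    by blast
  have "set (f n) \<subseteq> candidate_cuts \<and> card (set (f n)) = n" for n
  proof (induction n)
    case (Suc n)
    obtain ct where "ct \<in> candidate_cuts" "ct \<notin> set (f n)" "f (Suc n) = f n @ [ct]"
      using alg_step_adds_new_cut[OF steps[of n]] by blast
    then show ?case using Suc.IH by simp
  qed (simp add: f0)
  then have "Suc (card candidate_cuts) \<le> card candidate_cuts"
    using card_mono[OF finite_candidate_cuts] by metis
  then show False by simp
qed

end

theorem proposition6:
  fixes a :: "'k::finite \<Rightarrow> 'j::finite \<Rightarrow> nat" and c :: "'j \<Rightarrow> nat"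
    and b :: "'k \<Rightarrow> real" and bidder :: "'k \<Rightarrow> 'i::finite" and xs :: "'k \<Rightarrow> real"
  assumes "\<forall>j. 1 \<le> c j"
    and "\<forall>k j. a k j \<le> c j"
    and "\<forall>k. 0 \<le> b k"
    and "wdp_optimal a c b bidder xs"
  shows "\<not> (\<exists>f. f 0 = [] \<and> (\<forall>n. alg_step a c b bidder xs (f n) (f (Suc n))))
    \<and> (\<forall>cs. (alg_step a c b bidder xs)\<^sup>*\<^sup>* [] cs \<longrightarrow>
            (\<Sum>k\<in>UNIV. b k * xs k) < lp_value a c b bidder cs \<longrightarrow>
            (\<exists>cs'. alg_step a c b bidder xs cs cs'))
    \<and> (\<forall>cs. (alg_step a c b bidder xs)\<^sup>*\<^sup>* [] cs \<longrightarrow>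
            \<not> (\<Sum>k\<in>UNIV. b k * xs k) < lp_value a c b bidder cs \<longrightarrow>
            (\<forall>ct\<in>set cs. valid_cut a c bidder xs ct) \<and>
            (\<exists>p q s. qp_optimal a c b bidder xs cs p q s) \<and>
            (\<forall>p q s. qp_optimal a c b bidder xs cs p q s \<longrightarrow>
                      walrasian_eq a c b bidder xs cs p q))"
proof -
  interpret auction a c b bidder xs
    using assms by unfold_locales
  show ?thesis
  proof (intro conjI allI impI)
    show "\<not> (\<exists>f. f 0 = [] \<and> (\<forall>n. alg_step a c b bidder xs (f n) (f (Suc n))))"
      by (rule alg_terminates)
    fix cs assume reach: "reachable cs"
    then show "welfare < lp_value a c b bidder cs \<Longrightarrow> \<exists>cs'. alg_step a c b bidder xs cs cs'"
      by (rule alg_step_exists)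
    have cuts: "\<forall>ct\<in>set cs. valid_cut a c bidder xs ct \<and> 1 \<le> snd ct"
      using reachable_cuts[OF reach] .
    then show "\<forall>ct\<in>set cs. valid_cut a c bidder xs ct" by blast
    assume no_gap: "\<not> welfare < lp_value a c b bidder cs"
    have opt: "lp_optimal a c b bidder cs xs" by (rule lp_optimal_xs_if_no_gap[OF reach no_gap])
    then obtain p0 q0 s0 where "qp_feasible a c b bidder xs cs p0 q0 s0"
      using lp_strong_duality by blast
    with cuts show "\<exists>p q s. qp_optimal a c b bidder xs cs p q s"
      using qp_optimal_exists[OF supply_pos] by blast
    fix p q s assume "qp_optimal a c b bidder xs cs p q s"
    then have "qp_feasible a c b bidder xs cs p q s" by (simp add: qp_optimal_def)
    moreover have "lp_feasible a c bidder cs xs" using opt by (simp add: lp_optimal_def)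
    ultimately show "walrasian_eq a c b bidder xs cs p q"
      using walrasian_eq_if_qp_feasible[OF xs_feasible] by blast
  qed
qed

end
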